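(* Let $A$ be a bounded normal operator on a Hilbert space and $z_0$ a simple eigenvalue of $A$ (one-dimensional eigenspace) such that $z_0\notin C:=\mathrm{cvh}(\mathrm{spec}(A)\setminus\{z_0\})$. Let $z_1\in C$ satisfy $|z_0-z_1|=\min\{|w-z_0|:w\in C\}$. Let $P$ be an orthogonal projection and $w_1\neq w_2$ two distinct eigenvalues of $PAP\restriction\mathrm{ran}\,P$. Then \[ \frac{(w_1-z_1)\cdot(z_0-z_1)}{|z_1-z_0|^2}+\frac{(w_2-z_1)\cdot(z_0-z_1)}{|z_1-z_0|^2}\le1, \] and in particular $|w_1-z_0|+|w_2-z_0|\ge|z_1-z_0|$. Consequently $PAP\restriction\mathrm{ran}\,P$ has at most one eigenvalue in $\{w:|w-z_0|<\tfrac12|z_1-z_0|\}$.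
   Context: $\mathrm{cvh}$ denotes the (closed) convex hull. For $u,v\in\mathbb{C}$, $u\cdot v=\mathrm{Re}(u\bar v)$ is the Euclidean inner product on $\mathbb{C}\cong\mathbb{R}^2$. *)

theory Defs
  imports "HOL-Analysis.Analysis"
begin

text \<open>A complex Hilbert space, encoded as a real Hilbert space (real inner product,
complete) equipped with an orthogonal complex structure J (multiplication by i).\<close>

class chilbert = real_inner + complete_space +
  fixes jmult :: "'a \<Rightarrow> 'a"
  assumes jmult_add: "jmult (x + y) = jmult x + jmult y"
    and jmult_scaleR: "jmult (r *\<^sub>R x) = r *\<^sub>R jmult x"
    and jmult_jmult: "jmult (jmult x) = - x"
    and jmult_inner: "jmult x \<bullet> jmult y = x \<bullet> y"

definition cscale :: "complex \<Rightarrow> 'a::chilbert \<Rightarrow> 'a" where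
  "cscale z x = Re z *\<^sub>R x + Im z *\<^sub>R jmult x"

definition cinner :: "'a::chilbert \<Rightarrow> 'a \<Rightarrow> complex" where
  "cinner x y = Complex (x \<bullet> y) (x \<bullet> jmult y)"

definition bounded_clinear_op :: "('a::chilbert \<Rightarrow> 'a) \<Rightarrow> bool" where
  "bounded_clinear_op T \<longleftrightarrow> bounded_linear T \<and> (\<forall>z x. T (cscale z x) = cscale z (T x))"

definition is_adjoint :: "('a::chilbert \<Rightarrow> 'a) \<Rightarrow> ('a \<Rightarrow> 'a) \<Rightarrow> bool" where
  "is_adjoint T S \<longleftrightarrow> (\<forall>x y. cinner (T x) y = cinner x (S y))"

definition normal_op :: "('a::chilbert \<Rightarrow> 'a) \<Rightarrow> bool" where
  "normal_op T \<longleftrightarrow> bounded_clinear_op T \<and>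
     (\<exists>S. bounded_clinear_op S \<and> is_adjoint T S \<and> T \<circ> S = S \<circ> T)"

definition orth_proj :: "('a::chilbert \<Rightarrow> 'a) \<Rightarrow> bool" where
  "orth_proj P \<longleftrightarrow> bounded_clinear_op P \<and> P \<circ> P = P \<and> is_adjoint P P"

definition spec :: "('a::chilbert \<Rightarrow> 'a) \<Rightarrow> complex set" where
  "spec T = {z. \<not> (\<exists>B. bounded_clinear_op B \<and>
                 B \<circ> (\<lambda>x. T x - cscale z x) = id \<and> (\<lambda>x. T x - cscale z x) \<circ> B = id)}"

definition eigenspace :: "('a::chilbert \<Rightarrow> 'a) \<Rightarrow> complex \<Rightarrow> 'a set" where
  "eigenspace T z = {x. T x = cscale z x}"

definition is_eigenvalue :: "('a::chilbert \<Rightarrow> 'a) \<Rightarrow> complex \<Rightarrow> bool" where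
  "is_eigenvalue T z \<longleftrightarrow> (\<exists>x. x \<noteq> 0 \<and> T x = cscale z x)"

definition simple_eigenvalue :: "('a::chilbert \<Rightarrow> 'a) \<Rightarrow> complex \<Rightarrow> bool" where
  "simple_eigenvalue T z \<longleftrightarrow> (\<exists>v. v \<noteq> 0 \<and> eigenspace T z = range (\<lambda>c. cscale c v))"

definition is_compr_eigenvalue :: "('a::chilbert \<Rightarrow> 'a) \<Rightarrow> ('a \<Rightarrow> 'a) \<Rightarrow> complex \<Rightarrow> bool" where
  "is_compr_eigenvalue P A w \<longleftrightarrow> (\<exists>x \<in> range P. x \<noteq> 0 \<and> P (A (P x)) = cscale w x)"

text \<open>Euclidean inner product on C = R^2.\<close>
definition cdot :: "complex \<Rightarrow> complex \<Rightarrow> real" where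
  "cdot u v = Re (u * cnj v)"

end

(*
  Let e be a unit eigenvector for the simple eigenvalue z0 and u = z0 - z1. As z1 is the point
  of the closed convex set C nearest to z0, the half-plane Re (cnj u * w) <= Re (cnj u * z1)
  contains spec A - {z0} but not z0. The heart of the proof is that the numerical range of A on
  the orthogonal complement of e lies in this half-plane. For a normal operator, ||p(A)|| is at
  most the supremum of |p| on the spectrum, and on the complement of e the point z0 may be
  dropped from that supremum, since ((p / p z0)^n)(A) y tends to 0 there.
  Applied to p w = a - t + c w with a large, this gives the half-plane bound. Splitting a unit
  vector x along e then yields Re (cnj u * (<A x, x> - z1)) <= |u|^2 |<x, e>|^2. Distinct
  eigenvalues w1, w2 of the compression have orthonormal eigenvectors e1, e2 in ran P with
  <A ei, ei> = wi, and Bessel's inequality |<e1, e>|^2 + |<e2, e>|^2 <= 1 gives the estimate.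
*)
theory Submission
  imports Defs "HOL-Complex_Analysis.Cauchy_Integral_Formula" "HOL-Computational_Algebra.Fundamental_Theorem_Algebra"
begin

context chilbert begin
subclass banach ..
end

lemma norm_jmult[simp]: "norm (jmult (x::'a::chilbert)) = norm x"
  by (simp add: norm_eq_sqrt_inner jmult_inner)
lemma bounded_linear_jmult: "bounded_linear (jmult :: 'a::chilbert \<Rightarrow> 'a)"
  by (rule bounded_linear_intro[where K=1]) (auto simp: jmult_add jmult_scaleR)
lemma jmult_zero[simp]: "jmult (0::'a::chilbert) = 0"
  by (rule linear_0[OF bounded_linear.linear[OF bounded_linear_jmult]])
lemma jmult_diff: "jmult ((x::'a::chilbert) - y) = jmult x - jmult y"
  by (rule linear_diff[OF bounded_linear.linear[OF bounded_linear_jmult]])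
lemma inner_jmult_left: "jmult (x::'a::chilbert) \<bullet> y = - (x \<bullet> jmult y)"
proof -
  have "jmult x \<bullet> y = jmult (jmult x) \<bullet> jmult y" by (simp add: jmult_inner)
  also have "\<dots> = - (x \<bullet> jmult y)" by (simp add: jmult_jmult)
  finally show ?thesis .
qed
lemma inner_jmult_self[simp]: "(x::'a::chilbert) \<bullet> jmult x = 0"
  using inner_jmult_left[of x x] by (simp add: inner_commute)

lemma cscale_add_left: "cscale (a + b) x = cscale a x + cscale b (x::'a::chilbert)"
  by (simp add: cscale_def algebra_simps)
lemma cscale_add_right: "cscale a (x + y) = cscale a x + cscale a (y::'a::chilbert)"
  by (simp add: cscale_def algebra_simps jmult_add)
lemma cscale_diff_left: "cscale (a - b) x = cscale a x - cscale b (x::'a::chilbert)"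
  by (simp add: cscale_def algebra_simps)
lemma cscale_diff_right: "cscale a (x - y) = cscale a x - cscale a (y::'a::chilbert)"
  by (simp add: cscale_def algebra_simps jmult_diff)
lemma cscale_minus_left: "cscale (- a) x = - cscale a (x::'a::chilbert)"
  by (simp add: cscale_def algebra_simps)
lemma cscale_zero_left[simp]: "cscale 0 x = (0::'a::chilbert)"
  by (simp add: cscale_def)
lemma cscale_zero_right[simp]: "cscale a 0 = (0::'a::chilbert)"
  by (simp add: cscale_def)
lemma cscale_one[simp]: "cscale 1 x = (x::'a::chilbert)"
  by (simp add: cscale_def)
lemma cscale_of_real[simp]: "cscale (of_real r) x = r *\<^sub>R (x::'a::chilbert)"
  by (simp add: cscale_def)
lemma cscale_cscale: "cscale a (cscale b x) = cscale (a * b) (x::'a::chilbert)"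
  by (simp add: cscale_def jmult_add jmult_scaleR jmult_jmult algebra_simps scaleR_add_left[symmetric]
      del: scaleR_add_left)
lemma cscale_sum_right: "cscale a (sum f S) = (\<Sum>i\<in>S. cscale a (f i :: 'a::chilbert))"
  by (induct S rule: infinite_finite_induct) (auto simp: cscale_add_right)
lemma bounded_linear_cscale: "bounded_linear (cscale a :: 'a::chilbert \<Rightarrow> 'a)"
  unfolding cscale_def
  by (intro bounded_linear_add bounded_linear_scaleR_right bounded_linear_compose[OF _ bounded_linear_jmult]
      bounded_linear_ident)

lemma norm_cscale[simp]: "norm (cscale a x) = cmod a * norm (x::'a::chilbert)"
proof -
  have "(norm (cscale a x))^2 = cscale a x \<bullet> cscale a x"
    by (simp add: power2_norm_eq_inner)
  also have "\<dots> = (Re a)^2 * (x \<bullet> x) + (Im a)^2 * (jmult x \<bullet> jmult x)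
      + 2 * Re a * Im a * (x \<bullet> jmult x)"
    by (simp add: cscale_def inner_add_left inner_add_right inner_commute[of "jmult x" x]
        power2_eq_square algebra_simps)
  also have "\<dots> = (cmod a * norm x)^2"
    by (simp add: jmult_inner cmod_power2 power_mult_distrib algebra_simps power2_norm_eq_inner)
  finally show ?thesis
    by (metis norm_ge_zero mult_nonneg_nonneg power2_eq_imp_eq)
qed

lemma cinner_add_left: "cinner (x + y) z = cinner x z + cinner y (z::'a::chilbert)"
  by (simp add: cinner_def complex_eq_iff inner_add_left)
lemma cinner_add_right: "cinner x (y + z) = cinner x y + cinner x (z::'a::chilbert)"
  by (simp add: cinner_def complex_eq_iff inner_add_right jmult_add)
lemma cinner_diff_left: "cinner (x - y) z = cinner x z - cinner y (z::'a::chilbert)"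
  by (simp add: cinner_def complex_eq_iff inner_diff_left)
lemma cinner_diff_right: "cinner x (y - z) = cinner x y - cinner x (z::'a::chilbert)"
  by (simp add: cinner_def complex_eq_iff inner_diff_right jmult_diff)
lemma cinner_zero_left[simp]: "cinner 0 (x::'a::chilbert) = 0"
  by (simp add: cinner_def complex_eq_iff)
lemma cinner_zero_right[simp]: "cinner x (0::'a::chilbert) = 0"
  by (simp add: cinner_def complex_eq_iff)
lemma cinner_cscale_left: "cinner (cscale a x) y = a * cinner x (y::'a::chilbert)"
  by (simp add: cinner_def complex_eq_iff cscale_def inner_add_left inner_jmult_left jmult_jmult algebra_simps)
lemma cinner_commute: "cinner y x = cnj (cinner x (y::'a::chilbert))"
  by (simp add: cinner_def complex_eq_iff inner_commute) (metis inner_commute inner_jmult_left)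
lemma cinner_cscale_right: "cinner x (cscale a y) = cnj a * cinner x (y::'a::chilbert)"
proof -
  have "cinner x (cscale a y) = cnj (cinner (cscale a y) x)" by (rule cinner_commute)
  also have "\<dots> = cnj a * cnj (cinner y x)" by (simp add: cinner_cscale_left)
  also have "cnj (cinner y x) = cinner x y" by (simp add: cinner_commute[of x y])
  finally show ?thesis .
qed

lemma cinner_self: "cinner x x = of_real ((norm (x::'a::chilbert))^2)"
  by (simp add: cinner_def complex_eq_iff power2_norm_eq_inner)
lemma cinner_scaleR_left: "cinner (r *\<^sub>R x) y = of_real r * cinner x (y::'a::chilbert)"
  by (metis cscale_of_real cinner_cscale_left)

lemma Re_cinner: "Re (cinner x y) = x \<bullet> (y::'a::chilbert)"
  by (simp add: cinner_def)

lemma cinner_cauchy_schwarz: "cmod (cinner x y) \<le> norm x * norm (y::'a::chilbert)"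
proof (cases "cinner x y = 0")
  case True then show ?thesis by simp
next
  case False
  define a where "a = cnj (cinner x y) / cmod (cinner x y)"
  have ca: "cmod a = 1" using False by (simp add: a_def norm_divide)
  have "cinner (cscale a x) y = of_real (cmod (cinner x y))"
  proof -
    have "cnj (cinner x y) * cinner x y = of_real ((cmod (cinner x y))^2)"
      by (metis complex_norm_square mult.commute)
    then show ?thesis using False
      by (simp add: cinner_cscale_left a_def power2_eq_square)
  qed
  then have "cmod (cinner x y) = cscale a x \<bullet> y"
    by (metis Re_cinner Re_complex_of_real)
  also have "\<dots> \<le> norm (cscale a x) * norm y" by (rule norm_cauchy_schwarz)
  finally show ?thesis using ca by simp
qed

lemma bounded_linear_cinner_left: "bounded_linear (\<lambda>x. cinner x (y::'a::chilbert))"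
  by (rule bounded_linear_intro[where K="norm y"])
     (auto simp: cinner_add_left cinner_cscale_left[of "of_real r" for r, simplified] cinner_cauchy_schwarz
        scaleR_conv_of_real)

definition invertible_op :: "('a::chilbert \<Rightarrow> 'a) \<Rightarrow> bool" where
  "invertible_op T \<longleftrightarrow> (\<exists>B. bounded_clinear_op B \<and> B \<circ> T = id \<and> T \<circ> B = id)"

lemma mem_spec_iff: "z \<in> spec T \<longleftrightarrow> \<not> invertible_op (\<lambda>x. T x - cscale z x)"
  by (simp add: spec_def invertible_op_def)

lemma bounded_clinear_op_bounded_linear: "bounded_clinear_op T \<Longrightarrow> bounded_linear T"
  by (simp add: bounded_clinear_op_def)
lemma bounded_clinear_op_cscale: "bounded_clinear_op T \<Longrightarrow> T (cscale z x) = cscale z (T x)"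
  by (simp add: bounded_clinear_op_def)
lemma bounded_clinear_op_add: "bounded_clinear_op T \<Longrightarrow> T (x + y) = T x + T y"
  by (rule linear_add[OF bounded_linear.linear[OF bounded_clinear_op_bounded_linear]])
lemma bounded_clinear_op_diff: "bounded_clinear_op T \<Longrightarrow> T (x - y) = T x - T y"
  by (rule linear_diff[OF bounded_linear.linear[OF bounded_clinear_op_bounded_linear]])
lemma bounded_clinear_op_zero: "bounded_clinear_op T \<Longrightarrow> T 0 = 0"
  by (rule linear_0[OF bounded_linear.linear[OF bounded_clinear_op_bounded_linear]])
lemma bounded_clinear_op_sum: "bounded_clinear_op T \<Longrightarrow> T (sum f S) = (\<Sum>i\<in>S. T (f i))"
  by (rule linear_sum[OF bounded_linear.linear[OF bounded_clinear_op_bounded_linear]])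

lemma bounded_clinear_op_id: "bounded_clinear_op (\<lambda>x. x)"
  by (simp add: bounded_clinear_op_def bounded_linear_ident)
lemma bounded_clinear_op_scale: "bounded_clinear_op (cscale a)"
  by (simp add: bounded_clinear_op_def bounded_linear_cscale cscale_cscale mult.commute)
lemma bounded_clinear_op_compose:
  "bounded_clinear_op T \<Longrightarrow> bounded_clinear_op S \<Longrightarrow> bounded_clinear_op (\<lambda>x. T (S x))"
  unfolding bounded_clinear_op_def
  using bounded_linear_compose[of T S] by (simp add: o_def)
lemma bounded_clinear_op_plus:
  "bounded_clinear_op T \<Longrightarrow> bounded_clinear_op S \<Longrightarrow> bounded_clinear_op (\<lambda>x. T x + S x)"
  unfolding bounded_clinear_op_def
  using bounded_linear_add[of T S] by (simp add: cscale_add_right)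
lemma bounded_clinear_op_minus:
  "bounded_clinear_op T \<Longrightarrow> bounded_clinear_op S \<Longrightarrow> bounded_clinear_op (\<lambda>x. T x - S x)"
  unfolding bounded_clinear_op_def
  using bounded_linear_sub[of T S] by (simp add: cscale_diff_right)
lemma bounded_clinear_op_scale_compose: "bounded_clinear_op T \<Longrightarrow> bounded_clinear_op (\<lambda>x. cscale a (T x))"
  by (rule bounded_clinear_op_compose[OF bounded_clinear_op_scale])
lemma bounded_clinear_op_shift: "bounded_clinear_op T \<Longrightarrow> bounded_clinear_op (\<lambda>x. T x - cscale z x)"
  by (rule bounded_clinear_op_minus[OF _ bounded_clinear_op_scale])
lemma bounded_clinear_op_funpow: "bounded_clinear_op T \<Longrightarrow> bounded_clinear_op (T ^^ n)"
  by (induct n) (auto simp: id_def o_def bounded_clinear_op_id intro: bounded_clinear_op_compose)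

lemma bounded_clinear_op_onorm: "bounded_clinear_op T \<Longrightarrow> norm (T x) \<le> onorm T * norm x"
  by (rule onorm[OF bounded_clinear_op_bounded_linear])
lemma bounded_clinear_op_onorm_nonneg: "bounded_clinear_op T \<Longrightarrow> 0 \<le> onorm T"
  by (rule onorm_pos_le[OF bounded_clinear_op_bounded_linear])

lemma invertible_opI:
  assumes "bounded_clinear_op B" "\<And>x. B (T x) = x" "\<And>x. T (B x) = x"
  shows "invertible_op T"
  unfolding invertible_op_def using assms by (intro exI[of _ B]) auto

lemma invertible_op_compose:
  assumes "invertible_op F" "invertible_op G"
  shows "invertible_op (\<lambda>x. F (G x))"
proof -
  obtain B where B: "bounded_clinear_op B" "B \<circ> F = id" "F \<circ> B = id"
    using assms(1) by (auto simp: invertible_op_def)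
  obtain C where C: "bounded_clinear_op C" "C \<circ> G = id" "G \<circ> C = id"
    using assms(2) by (auto simp: invertible_op_def)
  show ?thesis
  proof (rule invertible_opI[of "\<lambda>x. C (B x)"])
    show "bounded_clinear_op (\<lambda>x. C (B x))" by (rule bounded_clinear_op_compose[OF C(1) B(1)])
    fix x
    show "C (B (F (G x))) = x" using B(2) C(2) by (metis comp_apply id_apply)
    show "F (G (C (B x))) = x" using B(3) C(3) by (metis comp_apply id_apply)
  qed
qed

lemma invertible_op_scale: "a \<noteq> 0 \<Longrightarrow> invertible_op (cscale a)"
  by (rule invertible_opI[of "cscale (1/a)"]) (auto simp: bounded_clinear_op_scale cscale_cscale)

lemma invertible_op_eq_0: "invertible_op T \<Longrightarrow> T x = 0 \<Longrightarrow> bounded_clinear_op T \<Longrightarrow> x = 0"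
  unfolding invertible_op_def by (metis bounded_clinear_op_zero comp_apply id_apply)

lemma is_adjoint_sym: "is_adjoint T S \<Longrightarrow> cinner (S x) y = cinner x (T y)"
  unfolding is_adjoint_def by (metis cinner_commute)

lemma norm_adjoint_eq_normal:
  assumes "is_adjoint T S" "T \<circ> S = S \<circ> T"
  shows "norm (S x) = norm (T x)"
proof -
  have c: "T (S z) = S (T z)" for z using assms(2) by (metis comp_apply)
  have "complex_of_real ((norm (S x))^2) = cinner (S x) (S x)" by (simp add: cinner_self)
  also have "\<dots> = cinner x (T (S x))" by (rule is_adjoint_sym[OF assms(1)])
  also have "\<dots> = cinner x (S (T x))" by (simp add: c)
  also have "\<dots> = cnj (cinner (S (T x)) x)" by (rule cinner_commute)
  also have "cinner (S (T x)) x = cinner (T x) (T x)" by (rule is_adjoint_sym[OF assms(1)])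
  also have "cnj (cinner (T x) (T x)) = complex_of_real ((norm (T x))^2)" by (simp add: cinner_self)
  finally have "(norm (S x))^2 = (norm (T x))^2" by (simp only: of_real_eq_iff)
  then show ?thesis by (simp add: power2_eq_imp_eq)
qed

lemma normal_norm_square_le:
  assumes "is_adjoint T S" "T \<circ> S = S \<circ> T"
  shows "(norm (T x))^2 \<le> norm x * norm (T (T x))"
proof -
  have "(norm (T x))^2 = Re (cinner (T x) (T x))" by (simp add: cinner_self)
  also have "\<dots> = Re (cinner x (S (T x)))" using assms(1) by (simp add: is_adjoint_def)
  also have "\<dots> = x \<bullet> S (T x)" by (rule Re_cinner)
  also have "\<dots> \<le> norm x * norm (S (T x))" by (rule norm_cauchy_schwarz)
  also have "norm (S (T x)) = norm (T (T x))" by (rule norm_adjoint_eq_normal[OF assms])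
  finally show ?thesis .
qed

lemma funpow_commute: "(\<And>x. T (S x) = S (T x)) \<Longrightarrow> (T ^^ n) (S x) = S ((T ^^ n) x)"
  by (induct n) auto

lemma is_adjoint_funpow: "is_adjoint T S \<Longrightarrow> is_adjoint (T ^^ n) (S ^^ n)"
proof (induct n)
  case 0 then show ?case by (simp add: is_adjoint_def)
next
  case (Suc n)
  show ?case unfolding is_adjoint_def
  proof (intro allI)
    fix x y
    have "cinner ((T ^^ Suc n) x) y = cinner (T ((T ^^ n) x)) y" by simp
    also have "\<dots> = cinner ((T ^^ n) x) (S y)" using Suc(2) by (simp add: is_adjoint_def)
    also have "\<dots> = cinner x ((S ^^ n) (S y))" using Suc(1)[OF Suc(2)] by (simp add: is_adjoint_def)
    also have "(S ^^ n) (S y) = (S ^^ Suc n) y" by (simp add: funpow_Suc_right del: funpow.simps)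
    finally show "cinner ((T ^^ Suc n) x) y = cinner x ((S ^^ Suc n) y)" .
  qed
qed

lemma normal_op_funpow:
  assumes "normal_op T" shows "normal_op (T ^^ n)"
proof -
  obtain S where S: "bounded_clinear_op S" "is_adjoint T S" "T \<circ> S = S \<circ> T"
    using assms by (auto simp: normal_op_def)
  have c: "T (S z) = S (T z)" for z using S(3) by (metis comp_apply)
  have c1: "(T ^^ n) (S z) = S ((T ^^ n) z)" for z by (rule funpow_commute[of T S, OF c])
  have c2: "(S ^^ n) ((T ^^ n) z) = (T ^^ n) ((S ^^ n) z)" for z
    by (rule funpow_commute) (simp add: c1)
  show ?thesis unfolding normal_op_def
    using assms S by (auto simp: normal_op_def bounded_clinear_op_funpow is_adjoint_funpow c2 fun_eq_iff
        intro!: exI[of _ "S ^^ n"])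
qed

lemma normal_opE:
  assumes "normal_op T"
  obtains S where "bounded_clinear_op T" "bounded_clinear_op S" "is_adjoint T S" "T \<circ> S = S \<circ> T"
  using assms by (auto simp: normal_op_def)

section \<open>Neumann series\<close>

lemma norm_funpow_le:
  fixes T :: "'a::real_normed_vector \<Rightarrow> 'a"
  assumes "\<And>x. norm (T x) \<le> q * norm x" "0 \<le> q"
  shows "norm ((T ^^ n) x) \<le> q ^ n * norm x"
proof (induct n)
  case 0
  show ?case by simp
next
  case (Suc n)
  have "norm ((T ^^ Suc n) x) = norm (T ((T ^^ n) x))" by simp
  also have "\<dots> \<le> q * norm ((T ^^ n) x)" by (rule assms(1))
  also have "\<dots> \<le> q * (q ^ n * norm x)" by (rule mult_left_mono[OF Suc assms(2)])
  finally show ?case by simp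
qed

lemma summable_norm_funpow:
  fixes T :: "'a::real_normed_vector \<Rightarrow> 'a"
  assumes bd: "\<And>x. norm (T x) \<le> q * norm x" and q: "0 \<le> q" "q < 1"
  shows "summable (\<lambda>n. norm ((T ^^ n) x))" and "(\<Sum>n. norm ((T ^^ n) x)) \<le> norm x / (1 - q)"
proof -
  have pb: "norm ((T ^^ n) x) \<le> q ^ n * norm x" for n by (rule norm_funpow_le[OF bd q(1)])
  have sg: "summable (\<lambda>n. q ^ n * norm x)"
    by (rule summable_mult2) (rule summable_geometric, simp add: q)
  show smn: "summable (\<lambda>n. norm ((T ^^ n) x))"
    by (rule summable_comparison_test'[OF sg]) (simp add: pb)
  have "(\<Sum>n. norm ((T ^^ n) x)) \<le> (\<Sum>n. q ^ n * norm x)" by (rule suminf_le[OF pb smn sg])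
  also have "\<dots> = (\<Sum>n. q ^ n) * norm x"
    by (rule suminf_mult2[symmetric]) (rule summable_geometric, simp add: q)
  also have "\<dots> = norm x / (1 - q)" using q by (simp add: suminf_geometric)
  finally show "(\<Sum>n. norm ((T ^^ n) x)) \<le> norm x / (1 - q)" .
qed

lemma neumann_series:
  fixes T :: "'a::chilbert \<Rightarrow> 'a"
  assumes bc: "bounded_clinear_op T" and q: "0 \<le> q" "q < 1" and bd: "\<And>x. norm (T x) \<le> q * norm x"
  defines "N \<equiv> \<lambda>x. (\<Sum>n. (T ^^ n) x)"
  shows "\<And>x. summable (\<lambda>n. (T ^^ n) x)"
    and "bounded_clinear_op N"
    and "\<And>x. N x - T (N x) = x"
    and "\<And>x. N (x - T x) = x"
proof -
  note smn = summable_norm_funpow[OF bd q]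
  show sm: "summable (\<lambda>n. (T ^^ n) x)" for x
    by (rule summable_norm_cancel[OF smn(1)])
  have bcn: "bounded_clinear_op (T ^^ n)" for n by (rule bounded_clinear_op_funpow[OF bc])
  have Nadd: "N (x + y) = N x + N y" for x y
    unfolding N_def using suminf_add[OF sm[of x] sm[of y]] by (simp add: bounded_clinear_op_add[OF bcn])
  have Ncs: "N (cscale a x) = cscale a (N x)" for a x
    unfolding N_def using bounded_linear.suminf[OF bounded_linear_cscale sm[of x], of a]
    by (simp add: bounded_clinear_op_cscale[OF bcn])
  have Nbd: "norm (N x) \<le> norm x * (1 / (1 - q))" for x
    unfolding N_def using summable_norm[OF smn(1), of x] smn(2)[of x] by simp
  show "bounded_clinear_op N"
    unfolding bounded_clinear_op_def
  proof (intro conjI allI)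
    show "bounded_linear N"
      by (rule bounded_linear_intro[where K="1 / (1 - q)"])
         (auto simp: Nadd Ncs[of "of_real r" for r, simplified] Nbd[simplified])
  qed (rule Ncs)
  have TN: "T (\<Sum>n. (T ^^ n) x) = (\<Sum>n. T ((T ^^ n) x))" for x
    using bounded_linear.suminf[OF bounded_clinear_op_bounded_linear[OF bc] sm[of x]] by simp
  show "N x - T (N x) = x" for x
    using suminf_split_head[OF sm[of x]] unfolding N_def TN by simp
  show "N (x - T x) = x" for x
  proof -
    have "N (x - T x) = N x - N (T x)"
      unfolding N_def using suminf_diff[OF sm[of x] sm[of "T x"]] by (simp add: bounded_clinear_op_diff[OF bcn])
    also have "N (T x) = (\<Sum>n. (T ^^ Suc n) x)"
      unfolding N_def by (simp add: funpow_Suc_right del: funpow.simps)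
    finally show ?thesis
      using suminf_split_head[OF sm[of x]] by (simp add: N_def)
  qed
qed

lemma invertible_op_id_minus:
  fixes T :: "'a::chilbert \<Rightarrow> 'a"
  assumes "bounded_clinear_op T" "0 \<le> q" "q < 1" "\<And>x. norm (T x) \<le> q * norm x"
  shows "invertible_op (\<lambda>x. x - T x)"
  using neumann_series[OF assms] by (intro invertible_opI[of "\<lambda>x. (\<Sum>n. (T ^^ n) x)"]) auto

lemma spec_norm_le_onorm:
  fixes A :: "'a::chilbert \<Rightarrow> 'a"
  assumes bc: "bounded_clinear_op A" and spec: "\<mu> \<in> spec A"
  shows "cmod \<mu> \<le> onorm A"
proof (rule ccontr)
  assume "\<not> ?thesis"
  then have mu: "onorm A < cmod \<mu>" by simp
  have onn: "0 \<le> onorm A" by (rule bounded_clinear_op_onorm_nonneg[OF bc])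
  then have mu0: "\<mu> \<noteq> 0" using mu by auto
  define T where "T = (\<lambda>x. cscale (1/\<mu>) (A x))"
  have bT: "bounded_clinear_op T" unfolding T_def by (rule bounded_clinear_op_scale_compose[OF bc])
  have "norm (T x) \<le> (onorm A / cmod \<mu>) * norm x" for x
    using bounded_clinear_op_onorm[OF bc, of x] mu0 by (simp add: T_def norm_divide field_simps)
  then have inv: "invertible_op (\<lambda>x. x - T x)"
    using mu onn mu0 by (intro invertible_op_id_minus[OF bT, of "onorm A / cmod \<mu>"]) (auto simp: field_simps)
  have eq: "(\<lambda>x. A x - cscale \<mu> x) = (\<lambda>x. cscale (- \<mu>) (x - T x))"
    using mu0 by (auto simp: fun_eq_iff T_def cscale_diff_right cscale_cscale cscale_minus_left)
  have "invertible_op (\<lambda>x. A x - cscale \<mu> x)"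
    unfolding eq by (rule invertible_op_compose[OF invertible_op_scale inv]) (use mu0 in simp)
  then show False using spec by (simp add: mem_spec_iff)
qed

section \<open>The norm of a normal operator is bounded by its spectral radius\<close>

locale resolvent_disc =
  fixes T :: "'a::chilbert \<Rightarrow> 'a" and \<rho> :: real
  assumes bcT: "bounded_clinear_op T" and rpos: "0 < \<rho>"
    and inv: "\<And>\<zeta>. cmod \<zeta> < \<rho> \<Longrightarrow> invertible_op (\<lambda>x. x - cscale \<zeta> (T x))"
begin

definition res :: "complex \<Rightarrow> 'a \<Rightarrow> 'a" where
  "res \<zeta> = (SOME B. bounded_clinear_op B \<and> B \<circ> (\<lambda>x. x - cscale \<zeta> (T x)) = id
                 \<and> (\<lambda>x. x - cscale \<zeta> (T x)) \<circ> B = id)"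

lemma res_props:
  assumes "cmod \<zeta> < \<rho>"
  shows "bounded_clinear_op (res \<zeta>)" "\<And>x. res \<zeta> (x - cscale \<zeta> (T x)) = x"
    "\<And>x. res \<zeta> x - cscale \<zeta> (T (res \<zeta> x)) = x"
proof -
  have "\<exists>B. bounded_clinear_op B \<and> B \<circ> (\<lambda>x. x - cscale \<zeta> (T x)) = id
                 \<and> (\<lambda>x. x - cscale \<zeta> (T x)) \<circ> B = id"
    using inv[OF assms] unfolding invertible_op_def .
  then have h: "bounded_clinear_op (res \<zeta>) \<and> res \<zeta> \<circ> (\<lambda>x. x - cscale \<zeta> (T x)) = id
                 \<and> (\<lambda>x. x - cscale \<zeta> (T x)) \<circ> res \<zeta> = id"
    unfolding res_def by (rule someI_ex)
  then show "bounded_clinear_op (res \<zeta>)" by simp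
  fix x
  from h show "res \<zeta> (x - cscale \<zeta> (T x)) = x" by (metis comp_apply id_apply)
  from h show "res \<zeta> x - cscale \<zeta> (T (res \<zeta> x)) = x" by (metis comp_apply id_apply)
qed

lemma resolvent_identity:
  assumes z: "cmod \<zeta> < \<rho>" and e: "cmod \<eta> < \<rho>"
  shows "res \<zeta> x - res \<eta> x = cscale (\<zeta> - \<eta>) (res \<zeta> (T (res \<eta> x)))"
proof -
  define w where "w = res \<eta> x"
  have x: "x = w - cscale \<eta> (T w)" using res_props(3)[OF e, of x] by (simp add: w_def)
  have "x = (w - cscale \<zeta> (T w)) + cscale (\<zeta> - \<eta>) (T w)"
    using x by (simp add: cscale_diff_left algebra_simps)
  then have "res \<zeta> x = res \<zeta> (w - cscale \<zeta> (T w)) + res \<zeta> (cscale (\<zeta> - \<eta>) (T w))"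
    by (metis bounded_clinear_op_add[OF res_props(1)[OF z]])
  also have "\<dots> = w + cscale (\<zeta> - \<eta>) (res \<zeta> (T w))"
    by (simp add: res_props(2)[OF z] bounded_clinear_op_cscale[OF res_props(1)[OF z]])
  finally show ?thesis by (simp add: w_def)
qed

lemma norm_res_le: "cmod \<zeta> < \<rho> \<Longrightarrow> norm (res \<zeta> x) \<le> onorm (res \<zeta>) * norm x"
  by (rule bounded_clinear_op_onorm[OF res_props(1)])

lemma onorm_res_le_double:
  assumes z: "cmod \<zeta> < \<rho>" and e: "cmod \<eta> < \<rho>"
    and small: "cmod (\<eta> - \<zeta>) * onorm T * onorm (res \<zeta>) \<le> 1/2"
  shows "onorm (res \<eta>) \<le> 2 * onorm (res \<zeta>)"
proof -
  have Tn: "0 \<le> onorm T" by (rule bounded_clinear_op_onorm_nonneg[OF bcT])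
  have Kz: "0 \<le> onorm (res \<zeta>)" by (rule bounded_clinear_op_onorm_nonneg[OF res_props(1)[OF z]])
  have Ke: "0 \<le> onorm (res \<eta>)" by (rule bounded_clinear_op_onorm_nonneg[OF res_props(1)[OF e]])
  have "norm (res \<eta> x) \<le> (onorm (res \<zeta>) + onorm (res \<eta>) / 2) * norm x" for x
  proof -
    have d: "res \<eta> x - res \<zeta> x = cscale (\<eta> - \<zeta>) (res \<eta> (T (res \<zeta> x)))" by (rule resolvent_identity[OF e z])
    have "norm (res \<eta> (T (res \<zeta> x))) \<le> onorm (res \<eta>) * (onorm T * (onorm (res \<zeta>) * norm x))"
    proof -
      have "norm (res \<eta> (T (res \<zeta> x))) \<le> onorm (res \<eta>) * norm (T (res \<zeta> x))" by (rule norm_res_le[OF e])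
      also have "\<dots> \<le> onorm (res \<eta>) * (onorm T * norm (res \<zeta> x))"
        by (rule mult_left_mono[OF bounded_clinear_op_onorm[OF bcT] Ke])
      also have "\<dots> \<le> onorm (res \<eta>) * (onorm T * (onorm (res \<zeta>) * norm x))"
        by (intro mult_left_mono norm_res_le[OF z] Tn Ke)
      finally show ?thesis .
    qed
    then have "norm (res \<eta> x - res \<zeta> x) \<le> cmod (\<eta> - \<zeta>) * (onorm (res \<eta>) * (onorm T * (onorm (res \<zeta>) * norm x)))"
      unfolding d by (simp add: mult_left_mono)
    also have "\<dots> = onorm (res \<eta>) * norm x * (cmod (\<eta> - \<zeta>) * onorm T * onorm (res \<zeta>))"
      by (simp add: algebra_simps)
    also have "\<dots> \<le> onorm (res \<eta>) * norm x * (1/2)"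
      by (intro mult_left_mono small) (simp add: Ke)
    finally have "norm (res \<eta> x - res \<zeta> x) \<le> onorm (res \<eta>) * norm x / 2" by simp
    moreover have "norm (res \<eta> x) \<le> norm (res \<zeta> x) + norm (res \<eta> x - res \<zeta> x)"
      by (metis add.commute diff_add_cancel norm_triangle_ineq)
    moreover have "norm (res \<zeta> x) \<le> onorm (res \<zeta>) * norm x" by (rule norm_res_le[OF z])
    ultimately show ?thesis by (simp add: algebra_simps)
  qed
  then have "onorm (res \<eta>) \<le> onorm (res \<zeta>) + onorm (res \<eta>) / 2"
    by (intro onorm_bound) (use Kz Ke in auto)
  then show ?thesis by simp
qed

lemma norm_res_diff_le:
  assumes z: "cmod \<zeta> < \<rho>" and e: "cmod \<eta> < \<rho>"
    and small: "cmod (\<eta> - \<zeta>) * onorm T * onorm (res \<zeta>) \<le> 1/2"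
  shows "norm (res \<eta> w - res \<zeta> w)
    \<le> cmod (\<eta> - \<zeta>) * (2 * onorm (res \<zeta>) * (onorm T * (onorm (res \<zeta>) * norm w)))"
proof -
  have K: "0 \<le> onorm (res \<zeta>)" by (rule bounded_clinear_op_onorm_nonneg[OF res_props(1)[OF z]])
  have Tn: "0 \<le> onorm T" by (rule bounded_clinear_op_onorm_nonneg[OF bcT])
  have "norm (res \<eta> (T (res \<zeta> w))) \<le> onorm (res \<eta>) * norm (T (res \<zeta> w))"
    by (rule norm_res_le[OF e])
  also have "\<dots> \<le> (2 * onorm (res \<zeta>)) * (onorm T * (onorm (res \<zeta>) * norm w))"
  proof (rule mult_mono[OF onorm_res_le_double[OF z e small]])
    have "norm (T (res \<zeta> w)) \<le> onorm T * norm (res \<zeta> w)" by (rule bounded_clinear_op_onorm[OF bcT])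
    also have "\<dots> \<le> onorm T * (onorm (res \<zeta>) * norm w)" by (intro mult_left_mono norm_res_le[OF z] Tn)
    finally show "norm (T (res \<zeta> w)) \<le> onorm T * (onorm (res \<zeta>) * norm w)" .
  qed (use K in auto)
  finally show ?thesis
    by (simp add: resolvent_identity[OF e z] mult_left_mono)
qed

lemma tendsto_res:
  assumes z: "cmod \<zeta> < \<rho>"
  shows "((\<lambda>\<eta>. res \<eta> w) \<longlongrightarrow> res \<zeta> w) (at \<zeta>)"
proof -
  define L where "L = onorm T * onorm (res \<zeta>)"
  have L: "0 \<le> L"
    using bounded_clinear_op_onorm_nonneg[OF bcT] bounded_clinear_op_onorm_nonneg[OF res_props(1)[OF z]]
    by (simp add: L_def)
  define \<delta> where "\<delta> = min (\<rho> - cmod \<zeta>) (1 / (2 * (L + 1)))"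
  have "0 < \<delta>" using z L by (simp add: \<delta>_def)
  define C where "C = 2 * onorm (res \<zeta>) * (onorm T * (onorm (res \<zeta>) * norm w))"
  have "\<forall>\<^sub>F \<eta> in at \<zeta>. norm (res \<eta> w - res \<zeta> w) \<le> cmod (\<eta> - \<zeta>) * C"
    unfolding eventually_at
  proof (intro exI[of _ \<delta>] conjI ballI impI)
    fix \<eta> :: complex assume "\<eta> \<noteq> \<zeta> \<and> dist \<eta> \<zeta> < \<delta>"
    then have d: "cmod (\<eta> - \<zeta>) < \<delta>" by (simp add: dist_norm)
    have e: "cmod \<eta> < \<rho>"
      using d norm_triangle_ineq2[of \<eta> \<zeta>] by (simp add: \<delta>_def)
    have "cmod (\<eta> - \<zeta>) * (2 * (L + 1)) < 1"
      using d L by (simp add: \<delta>_def pos_less_divide_eq)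
    moreover have "cmod (\<eta> - \<zeta>) * (2 * (L + 1)) = 2 * (cmod (\<eta> - \<zeta>) * L) + 2 * cmod (\<eta> - \<zeta>)"
      by (simp add: algebra_simps)
    moreover have "cmod (\<eta> - \<zeta>) * onorm T * onorm (res \<zeta>) = cmod (\<eta> - \<zeta>) * L"
      by (simp add: L_def mult.assoc)
    ultimately have "cmod (\<eta> - \<zeta>) * onorm T * onorm (res \<zeta>) \<le> 1/2"
      using norm_ge_zero[of "\<eta> - \<zeta>"] by linarith
    then show "norm (res \<eta> w - res \<zeta> w) \<le> cmod (\<eta> - \<zeta>) * C"
      unfolding C_def by (rule norm_res_diff_le[OF z e])
  qed (rule \<open>0 < \<delta>\<close>)
  moreover have "((\<lambda>\<eta>. cmod (\<eta> - \<zeta>) * C) \<longlongrightarrow> 0) (at \<zeta>)"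
    by (auto intro!: tendsto_eq_intros)
  ultimately have "((\<lambda>\<eta>. res \<eta> w - res \<zeta> w) \<longlongrightarrow> 0) (at \<zeta>)" by (rule Lim_null_comparison)
  then show ?thesis by (rule LIM_zero_cancel)
qed

lemma cinner_res_has_field_derivative:
  assumes z: "cmod \<zeta> < \<rho>"
  shows "((\<lambda>\<eta>. cinner (res \<eta> y) y') has_field_derivative cinner (res \<zeta> (T (res \<zeta> y))) y') (at \<zeta>)"
  unfolding has_field_derivative_iff
proof (rule Lim_transform_eventually)
  show "((\<lambda>\<eta>. cinner (res \<eta> (T (res \<zeta> y))) y') \<longlongrightarrow> cinner (res \<zeta> (T (res \<zeta> y))) y') (at \<zeta>)"
    by (rule bounded_linear.tendsto[OF bounded_linear_cinner_left tendsto_res[OF z]])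
  show "eventually (\<lambda>\<eta>. cinner (res \<eta> (T (res \<zeta> y))) y' =
          (cinner (res \<eta> y) y' - cinner (res \<zeta> y) y') / (\<eta> - \<zeta>)) (at \<zeta>)"
    unfolding eventually_at
  proof (intro exI[of _ "\<rho> - cmod \<zeta>"] conjI ballI impI)
    show "0 < \<rho> - cmod \<zeta>" using z by simp
    fix \<eta> :: complex assume "\<eta> \<noteq> \<zeta> \<and> dist \<eta> \<zeta> < \<rho> - cmod \<zeta>"
    then have ne: "\<eta> \<noteq> \<zeta>" and e: "cmod \<eta> < \<rho>"
      using norm_triangle_ineq2[of \<eta> \<zeta>] by (auto simp: dist_norm)
    have "cinner (res \<eta> y) y' - cinner (res \<zeta> y) y' = cinner (res \<eta> y - res \<zeta> y) y'"
      by (simp add: cinner_diff_left)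
    also have "\<dots> = (\<eta> - \<zeta>) * cinner (res \<eta> (T (res \<zeta> y))) y'"
      by (simp add: resolvent_identity[OF e z] cinner_cscale_left)
    finally show "cinner (res \<eta> (T (res \<zeta> y))) y' = (cinner (res \<eta> y) y' - cinner (res \<zeta> y) y') / (\<eta> - \<zeta>)"
      using ne by simp
  qed
qed

lemma holomorphic_cinner_res: "(\<lambda>\<eta>. cinner (res \<eta> y) y') holomorphic_on ball 0 \<rho>"
proof (subst holomorphic_on_open)
  show "\<forall>x\<in>ball 0 \<rho>. \<exists>f'. ((\<lambda>\<eta>. cinner (res \<eta> y) y') has_field_derivative f') (at x)"
  proof
    fix x :: complex assume "x \<in> ball 0 \<rho>"
    then have "cmod x < \<rho>" by simp
    then show "\<exists>f'. ((\<lambda>\<eta>. cinner (res \<eta> y) y') has_field_derivative f') (at x)"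
      using cinner_res_has_field_derivative[of x y y'] by blast
  qed
qed simp

lemma res_neumann_series:
  assumes sm: "cmod \<zeta> * onorm T < 1" and z: "cmod \<zeta> < \<rho>"
  shows "summable (\<lambda>n. cscale (\<zeta>^n) ((T^^n) y))" "res \<zeta> y = (\<Sum>n. cscale (\<zeta>^n) ((T^^n) y))"
proof -
  define T' where "T' = (\<lambda>x. cscale \<zeta> (T x))"
  have bT': "bounded_clinear_op T'" unfolding T'_def by (rule bounded_clinear_op_scale_compose[OF bcT])
  have bd: "norm (T' x) \<le> (cmod \<zeta> * onorm T) * norm x" for x
    unfolding T'_def using bounded_clinear_op_onorm[OF bcT, of x]
    by (simp add: mult.assoc mult_left_mono)
  have q0: "0 \<le> cmod \<zeta> * onorm T" using bounded_clinear_op_onorm_nonneg[OF bcT] by simp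
  have pw: "(T' ^^ n) x = cscale (\<zeta>^n) ((T^^n) x)" for n x
    by (induct n) (auto simp: T'_def bounded_clinear_op_cscale[OF bcT] cscale_cscale mult.commute)
  note N = neumann_series[OF bT' q0 sm bd]
  show "summable (\<lambda>n. cscale (\<zeta>^n) ((T^^n) y))" using N(1)[of y] by (simp add: pw)
  have "res \<zeta> y = res \<zeta> ((\<Sum>n. (T' ^^ n) y) - cscale \<zeta> (T (\<Sum>n. (T' ^^ n) y)))"
    using N(3)[of y] by (simp add: T'_def)
  also have "\<dots> = (\<Sum>n. (T' ^^ n) y)" by (rule res_props(2)[OF z])
  finally show "res \<zeta> y = (\<Sum>n. cscale (\<zeta>^n) ((T^^n) y))" by (simp add: pw)
qed

lemma fps_conv_radius_cinner_funpow_pos: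
  "0 < fps_conv_radius (Abs_fps (\<lambda>n. cinner ((T^^n) y) y'))"
proof -
  define Tn where "Tn = onorm T"
  have Tn: "0 \<le> Tn" unfolding Tn_def by (rule bounded_clinear_op_onorm_nonneg[OF bcT])
  define \<epsilon> where "\<epsilon> = 1 / (Tn + 1)"
  have epos: "0 < \<epsilon>" and eT: "Tn * \<epsilon> < 1" using Tn by (simp_all add: \<epsilon>_def field_simps)
  have "summable (\<lambda>n. cinner ((T^^n) y) y' * (of_real \<epsilon>)^n)"
  proof (rule summable_comparison_test')
    show "summable (\<lambda>n. (norm y * norm y') * (Tn * \<epsilon>) ^ n)"
      by (rule summable_mult, rule summable_geometric) (use Tn epos eT in simp)
    fix n
    have "cmod (cinner ((T^^n) y) y') \<le> norm ((T^^n) y) * norm y'" by (rule cinner_cauchy_schwarz)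
    also have "\<dots> \<le> (Tn ^ n * norm y) * norm y'"
      by (intro mult_right_mono norm_funpow_le[OF _ Tn]) (auto simp: Tn_def bounded_clinear_op_onorm[OF bcT])
    finally show "norm (cinner ((T^^n) y) y' * (of_real \<epsilon>)^n) \<le> (norm y * norm y') * (Tn * \<epsilon>) ^ n"
      using epos by (simp add: norm_mult norm_power power_mult_distrib mult_ac mult_right_mono)
  qed
  then have "norm (of_real \<epsilon> :: complex) \<le> conv_radius (\<lambda>n. cinner ((T^^n) y) y')"
    by (rule conv_radius_geI)
  then have "ereal \<epsilon> \<le> conv_radius (\<lambda>n. cinner ((T^^n) y) y')" using epos by simp
  with epos show ?thesis unfolding fps_conv_radius_def by (simp add: order.strict_trans2[of 0 "ereal \<epsilon>"])
qed

lemma cinner_res_has_fps_expansion: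
  "(\<lambda>\<eta>. cinner (res \<eta> y) y') has_fps_expansion Abs_fps (\<lambda>n. cinner ((T^^n) y) y')"
proof -
  define \<epsilon> where "\<epsilon> = min \<rho> (1 / (onorm T + 1))"
  have "0 < \<epsilon>" using rpos bounded_clinear_op_onorm_nonneg[OF bcT] by (simp add: \<epsilon>_def)
  have "\<forall>\<^sub>F z in nhds 0. eval_fps (Abs_fps (\<lambda>n. cinner ((T^^n) y) y')) z = cinner (res z y) y'"
    unfolding eventually_nhds_metric
  proof (intro exI[of _ \<epsilon>] conjI allI impI)
    fix z :: complex assume "dist z 0 < \<epsilon>"
    then have z1: "cmod z * (onorm T + 1) < 1" and z2: "cmod z < \<rho>"
      using bounded_clinear_op_onorm_nonneg[OF bcT] by (auto simp: \<epsilon>_def pos_less_divide_eq)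
    moreover have "cmod z * onorm T \<le> cmod z * (onorm T + 1)" by (simp add: algebra_simps)
    ultimately have "cmod z * onorm T < 1" by linarith
    note RN = res_neumann_series[OF this z2, of y]
    have "cinner (res z y) y' = (\<Sum>n. cinner (cscale (z^n) ((T^^n) y)) y')"
      unfolding RN(2) by (rule bounded_linear.suminf[OF bounded_linear_cinner_left RN(1)])
    also have "\<dots> = (\<Sum>n. cinner ((T^^n) y) y' * z ^ n)"
      by (simp add: cinner_cscale_left mult.commute)
    finally show "eval_fps (Abs_fps (\<lambda>n. cinner ((T^^n) y) y')) z = cinner (res z y) y'"
      by (simp add: eval_fps_def)
  qed (rule \<open>0 < \<epsilon>\<close>)
  then show ?thesis
    unfolding has_fps_expansion_def using fps_conv_radius_cinner_funpow_pos by simp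
qed

lemma higher_deriv_cinner_res: "(deriv ^^ n) (\<lambda>\<eta>. cinner (res \<eta> y) y') 0 = fact n * cinner ((T^^n) y) y'"
  using fps_nth_fps_expansion[OF cinner_res_has_fps_expansion[of y y'], of n] by (simp add: field_simps)

lemma res_bounded_on_cball:
  assumes "s < \<rho>"
  obtains K where "0 \<le> K" "\<And>\<eta>. \<eta> \<in> cball 0 s \<Longrightarrow> norm (res \<eta> y) \<le> K"
proof -
  have "continuous_on (cball 0 s) (\<lambda>\<eta>. res \<eta> y)"
    by (rule continuous_at_imp_continuous_on) (use assms in \<open>auto simp: isCont_def intro!: tendsto_res\<close>)
  then have "bounded ((\<lambda>\<eta>. res \<eta> y) ` cball 0 s)"
    by (rule compact_imp_bounded[OF compact_continuous_image[OF _ compact_cball]])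
  then obtain K where "\<forall>x\<in>(\<lambda>\<eta>. res \<eta> y) ` cball 0 s. norm x \<le> K"
    unfolding Elementary_Metric_Spaces.bounded_iff by blast
  then have "norm (res \<eta> y) \<le> max K 0" if "\<eta> \<in> cball 0 s" for \<eta>
    using that by (auto simp: le_max_iff_disj)
  with that[of "max K 0"] show ?thesis by simp
qed

lemma norm_funpow_le_Cauchy:
  assumes s: "0 < s" "s < \<rho>"
  shows "\<exists>K. \<forall>n. norm ((T^^n) y) \<le> K / s^n"
proof -
  obtain K where K: "0 \<le> K" "\<And>\<eta>. \<eta> \<in> cball 0 s \<Longrightarrow> norm (res \<eta> y) \<le> K"
    using res_bounded_on_cball[OF s(2)] by blast
  have "norm ((T^^n) y) \<le> K / s^n" for n
  proof -
    define v where "v = (T^^n) y"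
    have holo: "(\<lambda>\<eta>. cinner (res \<eta> y) v) holomorphic_on ball 0 \<rho>" by (rule holomorphic_cinner_res)
    have "norm ((deriv ^^ n) (\<lambda>\<eta>. cinner (res \<eta> y) v) 0) \<le> fact n * (K * norm v) / s^n"
    proof (rule Cauchy_inequality)
      show "(\<lambda>\<eta>. cinner (res \<eta> y) v) holomorphic_on ball 0 s"
        by (rule holomorphic_on_subset[OF holo]) (use s in auto)
      show "continuous_on (cball 0 s) (\<lambda>\<eta>. cinner (res \<eta> y) v)"
        by (rule continuous_on_subset[OF holomorphic_on_imp_continuous_on[OF holo]]) (use s in auto)
      fix x :: complex assume "norm (0 - x) = s"
      then have "norm (res x y) \<le> K" by (intro K(2)) auto
      then show "cmod (cinner (res x y) v) \<le> K * norm v"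
        by (metis cinner_cauchy_schwarz mult_right_mono norm_ge_zero order_trans)
    qed (rule s(1))
    then have "fact n * (norm v)^2 \<le> fact n * ((K / s^n) * norm v)"
      by (simp add: higher_deriv_cinner_res v_def cinner_self norm_mult norm_power)
    then have le: "norm v * norm v \<le> (K / s^n) * norm v"
      unfolding power2_eq_square[symmetric] by (rule mult_left_le_imp_le) simp
    show ?thesis
    proof (cases "v = 0")
      case True then show ?thesis using K(1) s(1) by (simp add: v_def[symmetric])
    next
      case False then show ?thesis using mult_right_le_imp_le[OF le] by (simp add: v_def)
    qed
  qed
  then show ?thesis by blast
qed

end

lemma normal_op_norm_funpow_power2_ge:
  assumes nT: "normal_op T" and y0: "0 < norm y"
  shows "norm y * (norm (T y) / norm y) ^ (2^k) \<le> norm ((T ^^ 2^k) y)"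
proof (induct k)
  case 0
  show ?case using y0 by simp
next
  case (Suc k)
  define a where "a = norm (T y) / norm y"
  define U where "U = T ^^ 2^k"
  obtain S where S: "is_adjoint U S" "U \<circ> S = S \<circ> U"
    using normal_op_funpow[OF nT, of "2^k"] by (auto simp: normal_op_def U_def)
  have "(norm y * a^(2^k))^2 \<le> (norm (U y))^2"
    using Suc y0 by (intro power_mono) (simp_all add: U_def a_def)
  also have "\<dots> \<le> norm y * norm (U (U y))" by (rule normal_norm_square_le[OF S])
  also have "U (U y) = (T ^^ 2^Suc k) y"
    by (simp add: U_def funpow_add mult_2 del: funpow.simps)
  also have "(norm y * a^(2^k))^2 = norm y * (norm y * a^(2^Suc k))"
    by (simp add: power2_eq_square mult_2 power_add)
  finally show ?case using y0 by (simp add: a_def)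
qed

text \<open>Cauchy estimates for the holomorphic resolvent give ||T^n y|| <= K / s^n for every s < rho,
  while for normal T the iterates T^(2^k) y grow at least like (||T y|| / ||y||)^(2^k).\<close>

lemma normal_op_norm_le_radius:
  fixes T :: "'a::chilbert \<Rightarrow> 'a"
  assumes nT: "normal_op T" and rpos: "0 < \<rho>"
    and inv: "\<And>\<zeta>. cmod \<zeta> < \<rho> \<Longrightarrow> invertible_op (\<lambda>x. x - cscale \<zeta> (T x))"
  shows "norm (T y) * \<rho> \<le> norm y"
proof (rule ccontr)
  assume "\<not> ?thesis"
  then have gt: "norm y < norm (T y) * \<rho>" by simp
  have bcT: "bounded_clinear_op T" using nT by (auto simp: normal_op_def)
  interpret resolvent_disc T \<rho> by unfold_locales (use bcT rpos inv in auto)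
  have Ty0: "0 < norm (T y)" using gt rpos by (smt (verit) norm_ge_zero zero_less_mult_iff)
  have y0: "0 < norm y" using Ty0 bounded_clinear_op_zero[OF bcT] by (cases "y = 0") auto
  define u where "u = norm y / norm (T y)"
  define s where "s = (u + \<rho>) / 2"
  have "u < \<rho>" using gt Ty0 by (simp add: u_def divide_less_eq mult.commute)
  moreover have "0 \<le> u" by (simp add: u_def)
  ultimately have s: "0 < s" "s < \<rho>" "u < s" by (simp_all add: s_def)
  obtain K where K: "\<And>n. norm ((T^^n) y) \<le> K / s^n"
    using norm_funpow_le_Cauchy[OF s(1,2), of y] by blast
  define q where "q = norm (T y) / norm y * s"
  have q1: "1 < q" using s(3) Ty0 y0 by (simp add: q_def u_def field_simps)
  have bnd: "q^(2^k) \<le> K / norm y" for k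
  proof -
    have "norm y * (norm (T y) / norm y)^(2^k) \<le> K / s^(2^k)"
      using normal_op_norm_funpow_power2_ge[OF nT y0, of k] K[of "2^k"] by linarith
    then show ?thesis using s(1) y0 by (simp add: q_def power_mult_distrib field_simps)
  qed
  obtain n where n: "K / norm y < q^n" using real_arch_pow[OF q1] by blast
  have "q^n \<le> q^(2^n)" by (rule power_increasing) (use q1 less_exp[of n] in auto)
  then show False using n bnd[of n] by linarith
qed

lemma invertible_op_id_minus_cscale:
  assumes "\<zeta> = 0 \<or> 1 / \<zeta> \<notin> spec T"
  shows "invertible_op (\<lambda>x. x - cscale \<zeta> (T x))"
proof (cases "\<zeta> = 0")
  case True
  then show ?thesis by (auto intro!: invertible_opI[of "\<lambda>x. x"] bounded_clinear_op_id)
next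
  case False
  then have inv: "invertible_op (\<lambda>x. T x - cscale (1 / \<zeta>) x)" using assms by (simp add: mem_spec_iff)
  have eq: "(\<lambda>x. x - cscale \<zeta> (T x)) = (\<lambda>x. cscale (- \<zeta>) (T x - cscale (1 / \<zeta>) x))"
    using False by (auto simp: fun_eq_iff cscale_diff_right cscale_cscale cscale_minus_left)
  show ?thesis unfolding eq
    by (rule invertible_op_compose[OF invertible_op_scale inv]) (use False in simp)
qed

lemma normal_op_norm_le_spectral_bound:
  fixes T :: "'a::chilbert \<Rightarrow> 'a"
  assumes nT: "normal_op T" and r: "0 \<le> r" and sp: "\<And>\<mu>. r < cmod \<mu> \<Longrightarrow> \<mu> \<notin> spec T"
  shows "norm (T y) \<le> r * norm y"
proof (rule ccontr)
  assume "\<not> ?thesis"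
  then have gt: "r * norm y < norm (T y)" by simp
  have bcT: "bounded_clinear_op T" using nT by (auto simp: normal_op_def)
  have y0: "0 < norm y"
  proof (rule ccontr)
    assume "\<not> 0 < norm y" then have "y = 0" by simp
    then show False using gt bounded_clinear_op_zero[OF bcT] by simp
  qed
  define t where "t = norm (T y) / norm y"
  have rt: "r < t" using gt y0 by (simp add: t_def pos_less_divide_eq)
  define r' where "r' = (r + t) / 2"
  have r'1: "r < r'" "r' < t" "0 < r'" using rt r by (auto simp: r'_def)
  have "r' * norm y < t * norm y" using r'1(2) y0 by simp
  also have "t * norm y = norm (T y)" using y0 by (simp add: t_def)
  finally have r': "r < r'" "r' * norm y < norm (T y)" "0 < r'" using r'1 by auto
  have inv: "invertible_op (\<lambda>x. x - cscale \<zeta> (T x))" if z: "cmod \<zeta> < 1 / r'" for \<zeta>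
  proof (rule invertible_op_id_minus_cscale)
    have "\<zeta> \<noteq> 0 \<Longrightarrow> r' < cmod (1 / \<zeta>)" using z r'(3) by (simp add: norm_divide field_simps)
    then show "\<zeta> = 0 \<or> 1 / \<zeta> \<notin> spec T" using r'(1) sp by force
  qed
  have "norm (T y) * (1 / r') \<le> norm y"
    by (rule normal_op_norm_le_radius[OF nT _ inv]) (use r' in auto)
  then show False using r' by (simp add: field_simps)
qed

section \<open>Polynomial functional calculus\<close>

definition op_poly :: "complex poly \<Rightarrow> ('a::chilbert \<Rightarrow> 'a) \<Rightarrow> 'a \<Rightarrow> 'a" where
  "op_poly p T x = (\<Sum>i\<le>degree p. cscale (coeff p i) ((T^^i) x))"

lemma op_poly_upto:
  assumes "degree p \<le> N"
  shows "op_poly p T x = (\<Sum>i\<le>N. cscale (coeff p i) ((T^^i) x))"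
  unfolding op_poly_def
  by (rule sum.mono_neutral_left) (use assms in \<open>auto simp: coeff_eq_0\<close>)

lemma op_poly_add: "op_poly (p + q) T x = op_poly p T x + op_poly q T x"
proof -
  define N where "N = max (degree p) (degree q)"
  have "degree (p + q) \<le> N" by (rule degree_add_le) (auto simp: N_def)
  then show ?thesis
    by (simp add: op_poly_upto[of _ N] N_def cscale_add_left sum.distrib)
qed

lemma op_poly_diff: "op_poly (p - q) T x = op_poly p T x - op_poly q T x"
proof -
  define N where "N = max (degree p) (degree q)"
  have "degree (p - q) \<le> N" by (rule degree_diff_le) (auto simp: N_def)
  then show ?thesis
    by (simp add: op_poly_upto[of _ N] N_def cscale_diff_left sum_subtractf)
qed

lemma op_poly_smult: "op_poly (smult c p) T x = cscale c (op_poly p T x)"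
proof -
  have "degree (smult c p) \<le> degree p" by (rule degree_smult_le)
  then show ?thesis
    by (simp add: op_poly_upto[of _ "degree p"] cscale_sum_right cscale_cscale op_poly_def)
qed

lemma op_poly_0[simp]: "op_poly 0 T x = 0"
  by (simp add: op_poly_def)

lemma op_poly_const: "op_poly [:c:] T x = cscale c x"
  by (simp add: op_poly_def)

lemma op_poly_pCons:
  assumes bc: "bounded_clinear_op T"
  shows "op_poly (pCons a p) T x = cscale a x + T (op_poly p T x)"
proof -
  have "degree (pCons a p) \<le> Suc (degree p)" by (rule degree_pCons_le)
  then have "op_poly (pCons a p) T x = (\<Sum>i\<le>Suc (degree p). cscale (coeff (pCons a p) i) ((T^^i) x))"
    by (rule op_poly_upto)
  also have "\<dots> = cscale a x + (\<Sum>i\<le>degree p. cscale (coeff p i) ((T^^Suc i) x))"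
    by (simp add: sum.atMost_Suc_shift del: sum.atMost_Suc)
  also have "(\<Sum>i\<le>degree p. cscale (coeff p i) ((T^^Suc i) x)) = T (op_poly p T x)"
    by (simp add: op_poly_def bounded_clinear_op_sum[OF bc] bounded_clinear_op_cscale[OF bc])
  finally show ?thesis .
qed

lemma op_poly_pCons_fun:
  "bounded_clinear_op T \<Longrightarrow> op_poly (pCons a p) T = (\<lambda>x. cscale a x + T (op_poly p T x))"
  by (simp add: fun_eq_iff op_poly_pCons)

lemma op_poly_mult:
  assumes bc: "bounded_clinear_op T"
  shows "op_poly (p * q) T x = op_poly p T (op_poly q T x)"
proof (induct p arbitrary: x rule: pCons_induct)
  case 0 then show ?case by simp
next
  case (pCons a p)
  have "op_poly (pCons a p * q) T x = op_poly (smult a q + pCons 0 (p * q)) T x"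
    by (simp add: mult_pCons_left)
  also have "\<dots> = cscale a (op_poly q T x) + T (op_poly (p * q) T x)"
    by (simp add: op_poly_add op_poly_smult op_poly_pCons[OF bc])
  also have "\<dots> = op_poly (pCons a p) T (op_poly q T x)"
    by (simp add: op_poly_pCons[OF bc] pCons(2))
  finally show ?case .
qed

lemma bounded_clinear_op_zero_map: "bounded_clinear_op (\<lambda>x::'a::chilbert. 0)"
  by (simp add: bounded_clinear_op_def bounded_linear_zero)

lemma bounded_clinear_op_poly:
  assumes bc: "bounded_clinear_op T"
  shows "bounded_clinear_op (op_poly p T)"
proof (induct p rule: pCons_induct)
  case 0
  have "op_poly 0 T = (\<lambda>x. 0)" by (simp add: fun_eq_iff)
  then show ?case by (simp add: bounded_clinear_op_zero_map)
next
  case (pCons a p)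
  show ?case unfolding op_poly_pCons_fun[OF bc]
    by (intro bounded_clinear_op_plus bounded_clinear_op_scale bounded_clinear_op_compose[OF bc pCons(2)])
qed

lemma op_poly_commute:
  assumes bS: "bounded_clinear_op S" and bT: "bounded_clinear_op T"
    and c: "\<And>x. S (T x) = T (S x)"
  shows "S (op_poly p T x) = op_poly p T (S x)"
proof (induct p arbitrary: x rule: pCons_induct)
  case 0 then show ?case by (simp add: bounded_clinear_op_zero[OF bS])
next
  case (pCons a p)
  show ?case
    by (simp add: op_poly_pCons[OF bT] bounded_clinear_op_add[OF bS] bounded_clinear_op_cscale[OF bS] c pCons(2))
qed

lemma is_adjoint_op_poly:
  assumes bT: "bounded_clinear_op T" and bS: "bounded_clinear_op S" and adj: "is_adjoint T S"
  shows "is_adjoint (op_poly p T) (op_poly (map_poly cnj p) S)"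
proof (induct p rule: pCons_induct)
  case 0 then show ?case by (simp add: is_adjoint_def)
next
  case (pCons a p)
  have cm: "S (op_poly (map_poly cnj p) S y) = op_poly (map_poly cnj p) S (S y)" for y
    by (rule op_poly_commute[OF bS bS]) simp
  show ?case unfolding is_adjoint_def
  proof (intro allI)
    fix x y
    have "cinner (op_poly (pCons a p) T x) y = a * cinner x y + cinner (op_poly p T x) (S y)"
      using adj by (simp add: op_poly_pCons[OF bT] cinner_add_left cinner_cscale_left is_adjoint_def)
    also have "cinner (op_poly p T x) (S y) = cinner x (op_poly (map_poly cnj p) S (S y))"
      using pCons(2) by (simp add: is_adjoint_def)
    also have "a * cinner x y + cinner x (op_poly (map_poly cnj p) S (S y)) =
        cinner x (op_poly (map_poly cnj (pCons a p)) S y)"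
      by (simp add: map_poly_pCons op_poly_pCons[OF bS] cinner_add_right cinner_cscale_right cm)
    finally show "cinner (op_poly (pCons a p) T x) y = cinner x (op_poly (map_poly cnj (pCons a p)) S y)" .
  qed
qed

lemma normal_op_poly:
  assumes nT: "normal_op T"
  shows "normal_op (op_poly p T)"
proof -
  obtain S where S: "bounded_clinear_op T" "bounded_clinear_op S" "is_adjoint T S" "T \<circ> S = S \<circ> T"
    by (rule normal_opE[OF nT])
  have c: "S (T x) = T (S x)" for x using S(4) by (metis comp_apply)
  have c1: "S (op_poly p T x) = op_poly p T (S x)" for x by (rule op_poly_commute[OF S(2) S(1) c])
  have c2: "op_poly p T (op_poly (map_poly cnj p) S x) = op_poly (map_poly cnj p) S (op_poly p T x)" for x
    by (rule op_poly_commute[OF bounded_clinear_op_poly[OF S(1)] S(2)]) (simp add: c1)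
  show ?thesis unfolding normal_op_def
    using S bounded_clinear_op_poly is_adjoint_op_poly[OF S(1-3)] c2
    by (auto simp: fun_eq_iff intro!: exI[of _ "op_poly (map_poly cnj p) S"])
qed

lemma op_poly_eigenvector:
  assumes bT: "bounded_clinear_op T" and ev: "T v = cscale \<sigma> v"
  shows "op_poly p T v = cscale (poly p \<sigma>) v"
  by (induct p rule: pCons_induct)
     (auto simp: op_poly_pCons[OF bT] bounded_clinear_op_cscale[OF bT] ev cscale_cscale
        cscale_add_left[symmetric] mult.commute)

lemma op_poly_linear:
  assumes bT: "bounded_clinear_op T"
  shows "op_poly [:a, b:] T x = cscale a x + cscale b (T x)"
  by (simp add: op_poly_pCons[OF bT] op_poly_const bounded_clinear_op_cscale[OF bT]
      bounded_clinear_op_add[OF bT] bounded_clinear_op_zero[OF bT])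

lemma invertible_op_poly:
  assumes bT: "bounded_clinear_op T"
  shows "q \<noteq> 0 \<Longrightarrow> (\<forall>w\<in>spec T. poly q w \<noteq> 0) \<Longrightarrow> invertible_op (op_poly q T)"
proof (induct "degree q" arbitrary: q rule: less_induct)
  case less
  show ?case
  proof (cases "degree q = 0")
    case True
    define c where "c = coeff q 0"
    have q: "q = [:c:]" using degree_0_id[OF True] by (simp add: c_def)
    have c0: "c \<noteq> 0" using less(2) q by simp
    have "op_poly q T = cscale c" by (simp add: fun_eq_iff q op_poly_const)
    then show ?thesis using invertible_op_scale[OF c0] by simp
  next
    case False
    then have "\<not> constant (poly q)" by (simp add: constant_degree)
    then obtain r where r: "poly q r = 0" using fundamental_theorem_of_algebra by blast
    then have "[:-r, 1:] dvd q" by (simp add: poly_eq_0_iff_dvd)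
    then obtain q' where q: "q = [:-r, 1:] * q'" by (auto elim: dvdE)
    have q'0: "q' \<noteq> 0" using less(2) q by auto
    have d1: "degree ([:-r, 1:] * q') = degree [:-r,1:] + degree q'"
      by (rule degree_mult_eq) (use q'0 in auto)
    have dq: "degree q = Suc (degree q')" unfolding q d1 by simp
    have roots: "\<forall>w\<in>spec T. poly q' w \<noteq> 0" using less(3) q by auto
    have inv': "invertible_op (op_poly q' T)"
      by (rule less(1)[OF _ q'0 roots]) (simp add: dq)
    have rs: "r \<notin> spec T" using less(3) r by auto
    then have invr: "invertible_op (\<lambda>x. T x - cscale r x)" by (simp add: mem_spec_iff)
    have "op_poly q T x = op_poly [:-r, 1:] T (op_poly q' T x)" for x
      by (simp only: q op_poly_mult[OF bT])
    then have "op_poly q T = (\<lambda>x. (\<lambda>z. T z - cscale r z) (op_poly q' T x))"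
      by (simp add: fun_eq_iff op_poly_linear[OF bT] cscale_minus_left)
    then show ?thesis using invertible_op_compose[OF invr inv'] by simp
  qed
qed

lemma not_in_spec_op_poly:
  assumes bT: "bounded_clinear_op T" and ne: "spec T \<noteq> {}" and nr: "\<forall>w\<in>spec T. poly p w \<noteq> \<mu>"
  shows "\<mu> \<notin> spec (op_poly p T)"
proof -
  have eq: "(\<lambda>x. op_poly p T x - cscale \<mu> x) = op_poly (p - [:\<mu>:]) T"
    by (simp add: fun_eq_iff op_poly_diff op_poly_const)
  obtain w where "w \<in> spec T" using ne by blast
  then have "p - [:\<mu>:] \<noteq> 0" using nr by auto
  moreover have "\<forall>w\<in>spec T. poly (p - [:\<mu>:]) w \<noteq> 0" using nr by auto
  ultimately have "invertible_op (op_poly (p - [:\<mu>:]) T)" by (rule invertible_op_poly[OF bT])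
  then show ?thesis by (simp add: mem_spec_iff eq)
qed

lemma norm_op_poly_le:
  assumes nT: "normal_op T" and ne: "spec T \<noteq> {}"
    and bd: "\<forall>w\<in>spec T. cmod (poly p w) \<le> r"
  shows "norm (op_poly p T y) \<le> r * norm y"
proof -
  have bT: "bounded_clinear_op T" using nT by (simp add: normal_op_def)
  obtain w where "w \<in> spec T" using ne by blast
  then have r: "0 \<le> r" using bd by (meson norm_ge_zero order.trans)
  show ?thesis
  proof (rule normal_op_norm_le_spectral_bound[OF normal_op_poly[OF nT] r])
    fix \<mu> :: complex assume "r < cmod \<mu>"
    then have "\<forall>w\<in>spec T. poly p w \<noteq> \<mu>" using bd by force
    then show "\<mu> \<notin> spec (op_poly p T)" by (rule not_in_spec_op_poly[OF bT ne])
  qed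
qed

lemma op_poly_one[simp]: "op_poly 1 T x = x"
  by (simp add: op_poly_def)

lemma adjoint_eigenvector_normal:
  assumes nA: "normal_op A" and S: "bounded_clinear_op S" "is_adjoint A S" "A \<circ> S = S \<circ> A"
    and ev: "A e = cscale z0 e"
  shows "S e = cscale (cnj z0) e"
proof -
  have bA: "bounded_clinear_op A" using nA by (simp add: normal_op_def)
  have c: "A (S x) = S (A x)" for x using S(3) by (metis comp_apply)
  define A' where "A' = (\<lambda>x. A x - cscale z0 x)"
  define S' where "S' = (\<lambda>x. S x - cscale (cnj z0) x)"
  have adj: "is_adjoint A' S'"
    using S(2) by (simp add: is_adjoint_def A'_def S'_def cinner_diff_left cinner_diff_right
        cinner_cscale_left cinner_cscale_right)
  have com: "A' \<circ> S' = S' \<circ> A'"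
  proof (rule ext)
    fix x
    have 1: "A' (S' x) = A (S x) - cscale (cnj z0) (A x) - (cscale z0 (S x) - cscale (z0 * cnj z0) x)"
      by (simp add: A'_def S'_def bounded_clinear_op_diff[OF bA] bounded_clinear_op_cscale[OF bA]
          cscale_diff_right cscale_cscale)
    have 2: "S' (A' x) = S (A x) - cscale z0 (S x) - (cscale (cnj z0) (A x) - cscale (cnj z0 * z0) x)"
      by (simp add: A'_def S'_def bounded_clinear_op_diff[OF S(1)] bounded_clinear_op_cscale[OF S(1)]
          cscale_diff_right cscale_cscale)
    have 3: "cnj z0 * z0 = z0 * cnj z0" by (rule mult.commute)
    show "(A' \<circ> S') x = (S' \<circ> A') x" unfolding comp_apply 1 2 3 c by (simp add: algebra_simps)
  qed
  have "norm (S' e) = norm (A' e)" by (rule norm_adjoint_eq_normal[OF adj com])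
  also have "A' e = 0" by (simp add: A'_def ev)
  finally show ?thesis by (simp add: S'_def)
qed

lemma eigenvalue_in_spec:
  assumes "bounded_clinear_op A" "x \<noteq> 0" "A x = cscale z x"
  shows "z \<in> spec A"
proof -
  have "\<not> invertible_op (\<lambda>x. A x - cscale z x)"
    using invertible_op_eq_0[of "\<lambda>x. A x - cscale z x" x] assms bounded_clinear_op_shift by auto
  then show ?thesis by (simp add: mem_spec_iff)
qed

lemma eigenspace_eq_rangeD:
  assumes "eigenspace A z = range (\<lambda>c. cscale c e)"
  shows "A e = cscale z e" and "A x = cscale z x \<Longrightarrow> \<exists>\<beta>. x = cscale \<beta> e"
proof -
  have "e \<in> eigenspace A z" using assms rangeI[of "\<lambda>c. cscale c e" 1] by simp
  then show "A e = cscale z e" by (simp add: eigenspace_def)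
  show "\<exists>\<beta>. x = cscale \<beta> e" if "A x = cscale z x"
    using that assms by (auto simp: eigenspace_def set_eq_iff)
qed

lemma simple_eigenvalue_unit_vector:
  assumes "simple_eigenvalue A z"
  obtains e where "norm e = 1" "eigenspace A z = range (\<lambda>c. cscale c e)"
proof -
  obtain v where v: "v \<noteq> 0" "eigenspace A z = range (\<lambda>c. cscale c v)"
    using assms unfolding simple_eigenvalue_def by blast
  define e where "e = cscale (of_real (1 / norm v)) v"
  have "norm e = 1" using v(1) by (simp add: e_def norm_divide)
  moreover
  have "range (\<lambda>c. cscale c v) = range (\<lambda>c. cscale c e)"
  proof (intro equalityI subsetI)
    fix x assume "x \<in> range (\<lambda>c. cscale c v)"
    then obtain c where "x = cscale c v" by blast
    then have "x = cscale (c * of_real (norm v)) e" using v(1) by (simp add: e_def cscale_cscale)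
    then show "x \<in> range (\<lambda>c. cscale c e)" by blast
  next
    fix x assume "x \<in> range (\<lambda>c. cscale c e)"
    then obtain c where "x = cscale c e" by blast
    then have "x = cscale (c * of_real (1 / norm v)) v" by (simp add: e_def cscale_cscale)
    then show "x \<in> range (\<lambda>c. cscale c v)" by blast
  qed
  with v(2) have "eigenspace A z = range (\<lambda>c. cscale c e)" by simp
  ultimately show ?thesis using that by blast
qed

lemma op_poly_orthogonal_eigenvector:
  assumes nA: "normal_op A" and ev: "A e = cscale z e" and y: "cinner y e = 0"
  shows "cinner (op_poly p A y) e = 0"
proof -
  obtain S where S: "bounded_clinear_op A" "bounded_clinear_op S" "is_adjoint A S" "A \<circ> S = S \<circ> A"
    by (rule normal_opE[OF nA])
  have Se: "S e = cscale (cnj z) e" by (rule adjoint_eigenvector_normal[OF nA S(2-4) ev])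
  have "cinner (op_poly p A y) e = cinner y (op_poly (map_poly cnj p) S e)"
    using is_adjoint_op_poly[OF S(1-3), of p] by (simp add: is_adjoint_def)
  also have "\<dots> = 0" by (simp add: op_poly_eigenvector[OF S(2) Se] cinner_cscale_right y)
  finally show ?thesis .
qed

lemma Cauchy_geometric_bound:
  fixes u :: "nat \<Rightarrow> 'a::real_normed_vector"
  assumes \<rho>: "0 \<le> \<rho>" "\<rho> < 1" and bound: "\<And>m n. norm (u m - u n) \<le> (\<rho>^m + \<rho>^n) * C"
  shows "Cauchy u"
proof (rule CauchyI)
  fix \<epsilon> :: real assume "0 < \<epsilon>"
  have C: "0 \<le> C" using bound[of 0 0] by simp
  have "(\<lambda>M. 2 * \<rho>^M * C) \<longlonglongrightarrow> 2 * 0 * C"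
    using \<rho> by (intro tendsto_intros LIMSEQ_power_zero) auto
  from LIMSEQ_D[OF this \<open>0 < \<epsilon>\<close>] obtain M where "\<forall>n\<ge>M. \<bar>2 * \<rho>^n * C\<bar> < \<epsilon>"
    by auto
  then have M: "2 * \<rho>^M * C < \<epsilon>" by auto
  show "\<exists>M. \<forall>m\<ge>M. \<forall>n\<ge>M. norm (u m - u n) < \<epsilon>"
  proof (intro exI[of _ M] allI impI)
    fix m n assume "M \<le> m" "M \<le> n"
    then have "\<rho>^m \<le> \<rho>^M" "\<rho>^n \<le> \<rho>^M" using \<rho> by (simp_all add: power_decreasing)
    then have "\<rho>^m + \<rho>^n \<le> 2 * \<rho>^M" by simp
    then have "(\<rho>^m + \<rho>^n) * C \<le> 2 * \<rho>^M * C" using C by (intro mult_right_mono) auto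
    then show "norm (u m - u n) < \<epsilon>" using bound[of m n] M by linarith
  qed
qed

lemma Cauchy_op_poly_power:
  assumes nA: "normal_op A" and ne: "spec A \<noteq> {}"
    and h: "poly h z0 = 1" "0 \<le> \<rho>" "\<rho> < 1"
    and hb: "\<And>w. w \<in> spec A \<Longrightarrow> w \<noteq> z0 \<Longrightarrow> cmod (poly h w) \<le> \<rho>"
  shows "Cauchy (\<lambda>n. op_poly (h ^ n) A y)"
proof (rule Cauchy_geometric_bound[OF h(2,3)])
  fix m n
  have "op_poly (h ^ m) A y - op_poly (h ^ n) A y = op_poly (h ^ m - h ^ n) A y"
    by (simp add: op_poly_diff)
  also have "norm \<dots> \<le> (\<rho>^m + \<rho>^n) * norm y"
  proof (rule norm_op_poly_le[OF nA ne], intro ballI)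
    fix w assume w: "w \<in> spec A"
    show "cmod (poly (h ^ m - h ^ n) w) \<le> \<rho>^m + \<rho>^n"
    proof (cases "w = z0")
      case True then show ?thesis using h by (simp add: poly_power)
    next
      case False
      then have hk: "cmod (poly h w) ^ k \<le> \<rho> ^ k" for k
        using hb[OF w] by (simp add: power_mono)
      have "cmod (poly (h ^ m - h ^ n) w) \<le> cmod (poly h w) ^ m + cmod (poly h w) ^ n"
        using norm_triangle_ineq4[of "poly h w ^ m" "poly h w ^ n"] by (simp add: poly_power norm_power)
      then show ?thesis using hk[of m] hk[of n] by linarith
    qed
  qed
  finally show "norm (op_poly (h ^ m) A y - op_poly (h ^ n) A y) \<le> (\<rho>^m + \<rho>^n) * norm y" .
qed

lemma tendsto_eigen_defect_op_poly_power:
  assumes nA: "normal_op A" and ne: "spec A \<noteq> {}" and h: "0 \<le> \<rho>" "\<rho> < 1"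
    and hb: "\<And>w. w \<in> spec A \<Longrightarrow> w \<noteq> z0 \<Longrightarrow> cmod (poly h w) \<le> \<rho>"
  shows "(\<lambda>n. A (op_poly (h ^ n) A y) - cscale z0 (op_poly (h ^ n) A y)) \<longlonglongrightarrow> 0"
proof (rule Lim_null_comparison)
  have bA: "bounded_clinear_op A" using nA by (simp add: normal_op_def)
  define K where "K = onorm A + cmod z0"
  show "\<forall>\<^sub>F n in sequentially. norm (A (op_poly (h ^ n) A y) - cscale z0 (op_poly (h ^ n) A y))
          \<le> K * \<rho>^n * norm y"
  proof (intro always_eventually allI)
    fix n
    have "A (op_poly (h ^ n) A y) - cscale z0 (op_poly (h ^ n) A y) = op_poly ([:-z0, 1:] * h ^ n) A y"
      by (simp only: op_poly_mult[OF bA] op_poly_linear[OF bA]) (simp add: cscale_minus_left)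
    also have "norm \<dots> \<le> K * \<rho>^n * norm y"
    proof (rule norm_op_poly_le[OF nA ne], intro ballI)
      fix w assume w: "w \<in> spec A"
      have "cmod (w - z0) \<le> K"
        using spec_norm_le_onorm[OF bA w] norm_triangle_ineq4[of w z0] by (simp add: K_def)
      moreover have "w \<noteq> z0 \<Longrightarrow> cmod (poly h w) ^ n \<le> \<rho> ^ n"
        using hb[OF w] by (simp add: power_mono)
      moreover have "0 \<le> K" using bounded_clinear_op_onorm_nonneg[OF bA] by (simp add: K_def)
      moreover have "poly ([:-z0, 1:] * h ^ n) w = (w - z0) * poly h w ^ n"
        by (simp add: poly_power algebra_simps)
      ultimately show "cmod (poly ([:-z0, 1:] * h ^ n) w) \<le> K * \<rho>^n"
        using h by (cases "w = z0") (auto simp: norm_mult norm_power intro: mult_mono)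
    qed
    finally show "norm (A (op_poly (h ^ n) A y) - cscale z0 (op_poly (h ^ n) A y)) \<le> K * \<rho>^n * norm y" .
  qed
  show "(\<lambda>n. K * \<rho>^n * norm y) \<longlonglongrightarrow> 0"
    using h by (auto intro!: tendsto_mult_left_zero tendsto_mult_right_zero LIMSEQ_power_zero)
qed

text \<open>The sequence is Cauchy, and its limit is an eigenvector for z0 orthogonal to e, hence 0.\<close>

lemma op_poly_power_tendsto_0:
  assumes nA: "normal_op A" and e: "norm e = 1" "eigenspace A z0 = range (\<lambda>c. cscale c e)"
    and h: "poly h z0 = 1" "0 \<le> \<rho>" "\<rho> < 1"
    and hb: "\<And>w. w \<in> spec A \<Longrightarrow> w \<noteq> z0 \<Longrightarrow> cmod (poly h w) \<le> \<rho>"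
    and y: "cinner y e = 0"
  shows "(\<lambda>n. op_poly (h ^ n) A y) \<longlonglongrightarrow> 0"
proof -
  have bA: "bounded_clinear_op A" using nA by (simp add: normal_op_def)
  note ev = eigenspace_eq_rangeD[OF e(2)]
  have ne: "spec A \<noteq> {}" using eigenvalue_in_spec[OF bA _ ev(1)] e(1) by force
  obtain L where L: "(\<lambda>n. op_poly (h ^ n) A y) \<longlonglongrightarrow> L"
    using Cauchy_op_poly_power[OF nA ne h hb] by (auto simp: Cauchy_convergent_iff convergent_def)
  have "(\<lambda>n. A (op_poly (h ^ n) A y) - cscale z0 (op_poly (h ^ n) A y)) \<longlonglongrightarrow> A L - cscale z0 L"
    by (intro tendsto_diff bounded_linear.tendsto[OF bounded_clinear_op_bounded_linear[OF bA] L]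
        bounded_linear.tendsto[OF bounded_linear_cscale L])
  then have "A L - cscale z0 L = 0"
    using tendsto_eigen_defect_op_poly_power[OF nA ne h(2,3) hb] LIMSEQ_unique by blast
  then obtain \<beta> where \<beta>: "L = cscale \<beta> e" using ev(2) by auto
  have "(\<lambda>n. cinner (op_poly (h ^ n) A y) e) \<longlonglongrightarrow> cinner L e"
    by (rule bounded_linear.tendsto[OF bounded_linear_cinner_left L])
  then have "cinner L e = 0"
    using op_poly_orthogonal_eigenvector[OF nA ev(1) y] by (simp add: LIMSEQ_const_iff)
  then have "L = 0" using e(1) by (simp add: \<beta> cinner_cscale_left cinner_self)
  with L show ?thesis by simp
qed

lemma norm_op_poly_mult_one_minus_power_le:
  assumes nA: "normal_op A" and ne: "spec A \<noteq> {}" and r: "0 \<le> r"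
    and pb: "\<And>w. w \<in> spec A \<Longrightarrow> w \<noteq> z0 \<Longrightarrow> cmod (poly p w) \<le> r"
    and h0: "poly h z0 = 1" and hb: "\<And>w. w \<in> spec A \<Longrightarrow> w \<noteq> z0 \<Longrightarrow> cmod (poly h w) \<le> \<rho>"
    and \<rho>: "0 \<le> \<rho>"
  shows "norm (op_poly (p * (1 - h ^ n)) A y) \<le> r * (1 + \<rho>^n) * norm y"
proof (rule norm_op_poly_le[OF nA ne], intro ballI)
  fix w assume w: "w \<in> spec A"
  show "cmod (poly (p * (1 - h ^ n)) w) \<le> r * (1 + \<rho>^n)"
  proof (cases "w = z0")
    case True then show ?thesis using r \<rho> by (simp add: h0 poly_power)
  next
    case False
    have "cmod (1 - poly h w ^ n) \<le> 1 + \<rho>^n"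
      using norm_triangle_ineq4[of 1 "poly h w ^ n"] power_mono[OF hb[OF w False] norm_ge_zero, of n]
      by (simp add: norm_power)
    then show ?thesis using pb[OF w False] r
      by (simp add: poly_power norm_mult mult_mono)
  qed
qed

lemma norm_op_poly_orthogonal_le:
  assumes nA: "normal_op A" and e: "norm e = 1" "eigenspace A z0 = range (\<lambda>c. cscale c e)"
    and r: "0 \<le> r" "r < cmod (poly p z0)"
    and pb: "\<And>w. w \<in> spec A \<Longrightarrow> w \<noteq> z0 \<Longrightarrow> cmod (poly p w) \<le> r"
    and y: "cinner y e = 0"
  shows "norm (op_poly p A y) \<le> r * norm y"
proof -
  have bA: "bounded_clinear_op A" using nA by (simp add: normal_op_def)
  have ne: "spec A \<noteq> {}"
    using eigenvalue_in_spec[OF bA _ eigenspace_eq_rangeD(1)[OF e(2)]] e(1) by force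
  define \<rho> where "\<rho> = r / cmod (poly p z0)"
  define h where "h = smult (1 / poly p z0) p"
  have p0: "poly p z0 \<noteq> 0" using r by auto
  have \<rho>: "0 \<le> \<rho>" "\<rho> < 1" using r by (auto simp: \<rho>_def divide_less_eq)
  have hb: "cmod (poly h w) \<le> \<rho>" if "w \<in> spec A" "w \<noteq> z0" for w
    using pb[OF that] by (simp add: h_def \<rho>_def norm_divide divide_right_mono)
  have h0: "poly h z0 = 1" using p0 by (simp add: h_def)
  have u: "(\<lambda>n. op_poly (h ^ n) A y) \<longlonglongrightarrow> 0"
    by (rule op_poly_power_tendsto_0[OF nA e h0 \<rho> hb y])
  have bound: "norm (op_poly p A (y - op_poly (h ^ n) A y)) \<le> r * (1 + \<rho>^n) * norm y" for n
    using norm_op_poly_mult_one_minus_power_le[OF nA ne r(1) pb h0 hb \<rho>(1)]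
    by (simp add: op_poly_mult[OF bA] op_poly_diff)
  have "(\<lambda>n. norm (op_poly p A (y - op_poly (h ^ n) A y))) \<longlonglongrightarrow> norm (op_poly p A (y - 0))"
    by (intro tendsto_norm bounded_linear.tendsto[OF bounded_clinear_op_bounded_linear[OF
          bounded_clinear_op_poly[OF bA]]] tendsto_diff tendsto_const u)
  moreover have "(\<lambda>n. r * (1 + \<rho>^n) * norm y) \<longlonglongrightarrow> r * (1 + 0) * norm y"
    using \<rho> by (intro tendsto_intros LIMSEQ_power_zero) auto
  ultimately show ?thesis
    using bound by (auto intro: LIMSEQ_le)
qed

section \<open>The numerical range off a simple eigenvalue\<close>

lemma Re_mult_cnj_self: "Re (z * cnj z) = (cmod z)^2"
  by (simp add: complex_mult_cnj cmod_power2)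

lemma cmod_of_real_add_le:
  assumes "0 \<le> a" "Re l \<le> 0" "cmod l \<le> M"
  shows "cmod (of_real a + l) \<le> sqrt (a^2 + M^2)"
proof (rule real_le_rsqrt)
  have "(cmod (of_real a + l))^2 = a^2 + 2 * a * Re l + (cmod l)^2"
    unfolding cmod_power2 by (simp add: power2_eq_square algebra_simps)
  also have "\<dots> \<le> a^2 + M^2"
    using assms mult_nonneg_nonpos[of "2 * a" "Re l"] power_mono[of "cmod l" M 2] by simp
  finally show "(cmod (of_real a + l))^2 \<le> a^2 + M^2" .
qed

lemma power2_norm_scaleR_add:
  fixes y z :: "'a::real_inner"
  shows "(norm (a *\<^sub>R y + z))^2 = a^2 * (norm y)^2 + 2 * a * (y \<bullet> z) + (norm z)^2"
  unfolding power2_norm_eq_inner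
  by (simp add: inner_add_left inner_add_right inner_commute[of z y] power2_eq_square algebra_simps)

lemma nonpos_if_mult_bounded:
  fixes X K b :: real
  assumes "\<And>a. b < a \<Longrightarrow> a * X \<le> K"
  shows "X \<le> 0"
proof (rule ccontr)
  assume "\<not> X \<le> 0"
  define a where "a = max b 0 + (\<bar>K\<bar> + 1) / X"
  have "0 < (\<bar>K\<bar> + 1) / X" using \<open>\<not> X \<le> 0\<close> by simp
  then have "b < a" by (simp add: a_def max_def)
  moreover have "a * X = max b 0 * X + (\<bar>K\<bar> + 1) / X * X"
    unfolding a_def by (rule distrib_right)
  moreover have "(\<bar>K\<bar> + 1) / X * X = \<bar>K\<bar> + 1" using \<open>\<not> X \<le> 0\<close> by simp
  moreover have "0 \<le> max b 0 * X" using \<open>\<not> X \<le> 0\<close> by simp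
  ultimately have "K < a * X" by linarith
  with assms[OF \<open>b < a\<close>] show False by linarith
qed

text \<open>Test polynomial p w = a - t + c w: off z0 it is bounded by sqrt (a^2 + M^2), while
  |p z0| >= a + (Re (c * z0) - t). As ||p(A) y||^2 = a^2 ||y||^2 + 2 a X + ||c A y - t y||^2
  with X = Re (c * <A y, y>) - t ||y||^2, letting a grow forces X <= 0.\<close>

lemma numerical_range_orthogonal_half_plane:
  assumes nA: "normal_op A" and e: "norm e = 1" "eigenspace A z0 = range (\<lambda>c. cscale c e)"
    and hp: "\<And>w. w \<in> spec A \<Longrightarrow> w \<noteq> z0 \<Longrightarrow> Re (c * w) \<le> t" and z0: "t < Re (c * z0)"
    and y: "cinner y e = 0"
  shows "Re (c * cinner (A y) y) \<le> t * (norm y)^2"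
proof -
  have bA: "bounded_clinear_op A" using nA by (simp add: normal_op_def)
  define M where "M = cmod c * onorm A + \<bar>t\<bar>"
  have Mb: "cmod (c * w - of_real t) \<le> M" if "w \<in> spec A" for w
    using spec_norm_le_onorm[OF bA that] norm_triangle_ineq4[of "c * w" "of_real t"]
      mult_left_mono[of "cmod w" "onorm A" "cmod c"] by (simp add: M_def norm_mult)
  define \<delta> where "\<delta> = Re (c * z0) - t"
  have \<delta>: "0 < \<delta>" using z0 by (simp add: \<delta>_def)
  define ly where "ly = cscale c (A y) - t *\<^sub>R y"
  define X where "X = y \<bullet> ly"
  have "X = Re (cinner ly y)" by (simp add: X_def Re_cinner inner_commute)
  also have "cinner ly y = c * cinner (A y) y - of_real (t * (norm y)^2)"
    by (simp add: ly_def cinner_diff_left cinner_cscale_left cinner_scaleR_left cinner_self)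
  finally have X: "X = Re (c * cinner (A y) y) - t * (norm y)^2" by simp
  have "a * (2 * X) \<le> M^2 * (norm y)^2" if a: "max 0 (M^2 / (2 * \<delta>)) < a" for a
  proof -
    have a0: "0 < a" using a by simp
    define p where "p = [:of_real (a - t), c:]"
    have pw: "poly p w = of_real a + (c * w - of_real t)" for w by (simp add: p_def algebra_simps)
    have "M^2 < a * (2 * \<delta>)" using a \<delta> by (simp add: pos_divide_less_eq)
    then have "a^2 + M^2 < (a + \<delta>)^2"
      using mult_pos_pos[OF \<delta> \<delta>] by (simp add: power2_eq_square algebra_simps)
    then have "sqrt (a^2 + M^2) < sqrt ((a + \<delta>)^2)" by (rule real_sqrt_less_mono)
    also have "\<dots> = a + \<delta>" using a0 \<delta> by simp
    also have "a + \<delta> \<le> cmod (poly p z0)" using complex_Re_le_cmod[of "poly p z0"] by (simp add: pw \<delta>_def)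
    finally have sep: "sqrt (a^2 + M^2) < cmod (poly p z0)" .
    have "cmod (poly p w) \<le> sqrt (a^2 + M^2)" if "w \<in> spec A" "w \<noteq> z0" for w
      unfolding pw using a hp[OF that] Mb[OF that(1)] by (intro cmod_of_real_add_le) auto
    then have "norm (op_poly p A y) \<le> sqrt (a^2 + M^2) * norm y"
      using norm_op_poly_orthogonal_le[OF nA e _ sep _ y] by simp
    moreover have "op_poly p A y = a *\<^sub>R y + ly"
      by (simp add: p_def op_poly_linear[OF bA] ly_def cscale_diff_left algebra_simps)
    ultimately have "(norm (a *\<^sub>R y + ly))^2 \<le> (sqrt (a^2 + M^2) * norm y)^2"
      by (simp add: power_mono)
    then have "a^2 * (norm y)^2 + 2 * a * X + (norm ly)^2 \<le> a^2 * (norm y)^2 + M^2 * (norm y)^2"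
      unfolding power2_norm_scaleR_add power_mult_distrib X_def[symmetric] using a0
      by (simp add: distrib_right)
    moreover have "a * (2 * X) = 2 * a * X" by simp
    ultimately show ?thesis using zero_le_power2[of "norm ly"] by linarith
  qed
  then have "2 * X \<le> 0" by (rule nonpos_if_mult_bounded)
  with X show ?thesis by simp
qed

lemma numerical_range_half_plane_le:
  assumes nA: "normal_op A" and e: "norm e = 1" "eigenspace A z0 = range (\<lambda>c. cscale c e)"
    and hp: "\<And>w. w \<in> spec A \<Longrightarrow> w \<noteq> z0 \<Longrightarrow> Re (c * w) \<le> t" and z0: "t < Re (c * z0)"
  shows "Re (c * cinner (A x) x) - t * (norm x)^2 \<le> (Re (c * z0) - t) * (cmod (cinner x e))^2"
proof -
  obtain S where S: "bounded_clinear_op A" "bounded_clinear_op S" "is_adjoint A S" "A \<circ> S = S \<circ> A"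
    by (rule normal_opE[OF nA])
  note ev = eigenspace_eq_rangeD(1)[OF e(2)]
  have Se: "S e = cscale (cnj z0) e" by (rule adjoint_eigenvector_normal[OF nA S(2-4) ev])
  have ee: "cinner e e = 1" using e(1) by (simp add: cinner_self)
  define \<beta> where "\<beta> = cinner x e"
  define y where "y = x - cscale \<beta> e"
  have x: "x = y + cscale \<beta> e" by (simp add: y_def)
  have ye: "cinner y e = 0" by (simp add: y_def cinner_diff_left cinner_cscale_left ee \<beta>_def)
  then have ey: "cinner e y = 0" by (metis cinner_commute complex_cnj_zero)
  have Aye: "cinner (A y) e = 0"
    using S(3) by (simp add: is_adjoint_def Se cinner_cscale_right ye)
  have "cinner (A x) x = cinner (A y) y + (\<beta> * cnj \<beta>) * z0"
    by (simp add: x bounded_clinear_op_add[OF S(1)] bounded_clinear_op_cscale[OF S(1)] ev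
        cinner_add_left cinner_add_right cinner_cscale_left cinner_cscale_right Aye ey ee)
  moreover have "(norm x)^2 = (norm y)^2 + (cmod \<beta>)^2"
  proof -
    have "of_real ((norm x)^2) = cinner x x" by (simp add: cinner_self)
    also have "\<dots> = cinner y y + \<beta> * cnj \<beta>"
      by (simp add: x cinner_add_left cinner_add_right cinner_cscale_left cinner_cscale_right ye ey ee)
    also have "\<dots> = of_real ((norm y)^2 + (cmod \<beta>)^2)"
      by (simp add: cinner_self flip: complex_norm_square)
    finally show ?thesis by (simp only: of_real_eq_iff)
  qed
  ultimately have "Re (c * cinner (A x) x) - t * (norm x)^2
      = (Re (c * cinner (A y) y) - t * (norm y)^2) + (Re (c * z0) - t) * (cmod \<beta>)^2"
    by (simp add: complex_norm_square[symmetric] algebra_simps)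
  also have "\<dots> \<le> (Re (c * z0) - t) * (cmod \<beta>)^2"
    using numerical_range_orthogonal_half_plane[OF nA e hp z0 ye] by simp
  finally show ?thesis by (simp add: \<beta>_def)
qed

section \<open>Compressions\<close>

lemma bessel_two:
  fixes e1 e2 x :: "'a::chilbert"
  assumes n1: "norm e1 = 1" and n2: "norm e2 = 1" and o: "cinner e1 e2 = 0"
  shows "(cmod (cinner e1 x))^2 + (cmod (cinner e2 x))^2 \<le> (norm x)^2"
proof -
  define a1 where "a1 = cinner x e1"
  define a2 where "a2 = cinner x e2"
  have e11: "cinner e1 e1 = 1" and e22: "cinner e2 e2 = 1" using n1 n2 by (simp_all add: cinner_self)
  have o': "cinner e2 e1 = 0" using o by (metis cinner_commute complex_cnj_zero)
  define r where "r = x - cscale a1 e1 - cscale a2 e2"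
  have r1: "cinner r e1 = 0"
    by (simp add: r_def cinner_diff_left cinner_cscale_left e11 o' a1_def)
  have r2: "cinner r e2 = 0"
    by (simp add: r_def cinner_diff_left cinner_cscale_left e22 o a2_def)
  have "cinner r r = cinner r x"
    by (subst (2) r_def) (simp add: cinner_diff_right cinner_cscale_right r1 r2)
  also have "\<dots> = cinner x x - a1 * cnj a1 - a2 * cnj a2"
    using cinner_commute[of e1 x] cinner_commute[of e2 x]
    by (simp add: r_def cinner_diff_left cinner_cscale_left a1_def a2_def)
  finally have "of_real ((norm r)^2) = (of_real ((norm x)^2 - (cmod a1)^2 - (cmod a2)^2) :: complex)"
    by (simp add: cinner_self complex_norm_square[symmetric])
  then have "(norm r)^2 = (norm x)^2 - (cmod a1)^2 - (cmod a2)^2" by (simp only: of_real_eq_iff)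
  then have "(cmod a1)^2 + (cmod a2)^2 \<le> (norm x)^2" using zero_le_power2[of "norm r"] by linarith
  moreover have "cmod (cinner e1 x) = cmod a1" "cmod (cinner e2 x) = cmod a2"
    by (simp_all add: a1_def a2_def cinner_commute[of e1] cinner_commute[of e2])
  ultimately show ?thesis by simp
qed

lemma compr_cinner_eq:
  assumes oP: "orth_proj P" and u: "P u = u" and v: "P v = cscale w x"
  shows "cinner v u = w * cinner x u"
proof -
  have "cinner v u = cinner v (P u)" using u by simp
  also have "\<dots> = cinner (P v) u" using oP by (simp add: orth_proj_def is_adjoint_def)
  also have "\<dots> = w * cinner x u" using v by (simp add: cinner_cscale_left)
  finally show ?thesis .
qed

lemma cinner_op_cscale:
  assumes "bounded_clinear_op A"
  shows "cinner (A (cscale k y)) (cscale k y) = k * cnj k * cinner (A y) y"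
  by (simp add: bounded_clinear_op_cscale[OF assms] cinner_cscale_left cinner_cscale_right)

lemma compr_eigenvalue_unit_vector:
  assumes oP: "orth_proj P" and bA: "bounded_clinear_op A" and w: "is_compr_eigenvalue P A w"
  obtains e where "norm e = 1" "P e = e" "P (A e) = cscale w e"
proof -
  have bP: "bounded_clinear_op P" and PP: "\<And>x. P (P x) = P x"
    using oP by (auto simp: orth_proj_def fun_eq_iff)
  obtain x where x: "x \<noteq> 0" "P x = x" "P (A x) = cscale w x"
    using w PP unfolding is_compr_eigenvalue_def by auto
  define e where "e = cscale (of_real (1 / norm x)) x"
  have "norm e = 1" using x(1) by (simp add: e_def norm_divide)
  moreover have "P e = e" by (simp add: e_def bounded_clinear_op_cscale[OF bP] x(2))
  moreover have "P (A e) = cscale w e"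
    by (simp add: e_def bounded_clinear_op_cscale[OF bA] bounded_clinear_op_cscale[OF bP] x(3)
        cscale_cscale mult.commute)
  ultimately show ?thesis using that by blast
qed

lemma compr_eigenvalues_orthonormal:
  assumes oP: "orth_proj P" and bA: "bounded_clinear_op A"
    and w: "is_compr_eigenvalue P A w1" "is_compr_eigenvalue P A w2" "w1 \<noteq> w2"
  obtains e1 e2 where "norm e1 = 1" "norm e2 = 1" "cinner e1 e2 = 0"
    "cinner (A e1) e1 = w1" "cinner (A e2) e2 = w2"
proof -
  have bP: "bounded_clinear_op P" using oP by (simp add: orth_proj_def)
  obtain e1 where e1: "norm e1 = 1" "P e1 = e1" "P (A e1) = cscale w1 e1"
    by (rule compr_eigenvalue_unit_vector[OF oP bA w(1)])
  obtain f where f: "norm f = 1" "P f = f" "P (A f) = cscale w2 f"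
    by (rule compr_eigenvalue_unit_vector[OF oP bA w(2)])
  have e1e1: "cinner e1 e1 = 1" using e1(1) by (simp add: cinner_self)
  define \<beta> where "\<beta> = cinner f e1"
  define y where "y = f - cscale \<beta> e1"
  have Py: "P y = y"
    by (simp add: y_def bounded_clinear_op_diff[OF bP] bounded_clinear_op_cscale[OF bP] f(2) e1(2))
  have "cinner e1 y = cinner e1 f - cnj \<beta> * cinner e1 e1"
    by (simp add: y_def cinner_diff_right cinner_cscale_right)
  then have e1y: "cinner e1 y = 0" by (simp add: e1e1 \<beta>_def cinner_commute[of e1 f])
  have "f = y + cscale \<beta> e1" by (simp add: y_def)
  then have fy: "cinner f y = cinner y y" by (simp add: cinner_add_left cinner_cscale_left e1y)
  have "A y = A f - cscale \<beta> (A e1)"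
    by (simp add: y_def bounded_clinear_op_diff[OF bA] bounded_clinear_op_cscale[OF bA])
  then have "cinner (A y) y = cinner (A f) y - \<beta> * cinner (A e1) y"
    by (simp add: cinner_diff_left cinner_cscale_left)
  also have "\<dots> = w2 * cinner y y"
    by (simp add: compr_cinner_eq[OF oP Py f(3)] compr_cinner_eq[OF oP Py e1(3)] e1y fy)
  finally have Ay: "cinner (A y) y = w2 * cinner y y" .
  have "y \<noteq> 0"
  proof
    assume "y = 0"
    then have "f = cscale \<beta> e1" by (simp add: y_def)
    then have "P (A f) = cscale w1 f"
      by (metis bounded_clinear_op_cscale[OF bA] bounded_clinear_op_cscale[OF bP] e1(3) cscale_cscale
          mult.commute)
    with f(3) have "cscale (w2 - w1) f = 0" by (simp add: cscale_diff_left)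
    then show False using w(3) f(1) by (metis norm_cscale norm_zero mult_eq_0_iff norm_eq_zero
          right_minus_eq zero_neq_one)
  qed
  define e2 where "e2 = cscale (of_real (1 / norm y)) y"
  have "norm e2 = 1" using \<open>y \<noteq> 0\<close> by (simp add: e2_def norm_divide)
  moreover have "cinner e1 e2 = 0" by (simp add: e2_def cinner_cscale_right e1y)
  moreover have "cinner (A e1) e1 = w1" by (simp add: compr_cinner_eq[OF oP e1(2,3)] e1e1)
  moreover have "cinner (A e2) e2 = w2"
    using \<open>y \<noteq> 0\<close> by (simp add: e2_def cinner_op_cscale[OF bA] Ay cinner_self power2_eq_square)
  ultimately show ?thesis using e1(1) that by blast
qed

lemma compr_eigenvalues_half_plane:
  assumes nA: "normal_op A" and e: "norm e = 1" "eigenspace A z0 = range (\<lambda>c. cscale c e)"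
    and hp: "\<And>w. w \<in> spec A \<Longrightarrow> w \<noteq> z0 \<Longrightarrow> Re (c * w) \<le> t" and z0: "t < Re (c * z0)"
    and oP: "orth_proj P"
    and w: "is_compr_eigenvalue P A w1" "is_compr_eigenvalue P A w2" "w1 \<noteq> w2"
  shows "Re (c * w1) + Re (c * w2) \<le> Re (c * z0) + t"
proof -
  have bA: "bounded_clinear_op A" using nA by (simp add: normal_op_def)
  obtain e1 e2 where e12: "norm e1 = 1" "norm e2 = 1" "cinner e1 e2 = 0"
      "cinner (A e1) e1 = w1" "cinner (A e2) e2 = w2"
    by (rule compr_eigenvalues_orthonormal[OF oP bA w])
  have "(cmod (cinner e1 e))^2 + (cmod (cinner e2 e))^2 \<le> 1"
    using bessel_two[OF e12(1-3), of e] e(1) by simp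
  then have "(Re (c * z0) - t) * ((cmod (cinner e1 e))^2 + (cmod (cinner e2 e))^2) \<le> Re (c * z0) - t"
    using mult_left_mono[of _ 1 "Re (c * z0) - t"] z0 by simp
  moreover have "Re (c * w1) - t \<le> (Re (c * z0) - t) * (cmod (cinner e1 e))^2"
    using numerical_range_half_plane_le[OF nA e hp z0, of e1] e12 by simp
  moreover have "Re (c * w2) - t \<le> (Re (c * z0) - t) * (cmod (cinner e2 e))^2"
    using numerical_range_half_plane_le[OF nA e hp z0, of e2] e12 by simp
  ultimately show ?thesis unfolding distrib_left by linarith
qed

lemma nearest_point_half_plane:
  fixes z0 z1 w :: complex
  assumes "convex S" "closed S" "z1 \<in> S" "w \<in> S" "\<forall>v\<in>S. cmod (z0 - z1) \<le> cmod (v - z0)"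
  shows "Re (cnj (z0 - z1) * w) \<le> Re (cnj (z0 - z1) * z1)"
proof -
  have "(z0 - z1) \<bullet> (w - z1) \<le> 0"
    using any_closest_point_dot[OF assms(1-4)] assms(5) by (simp add: dist_norm norm_minus_commute)
  then show ?thesis by (simp add: inner_complex_def algebra_simps)
qed

lemma dist_sum_ge_if_cdot_sum_le:
  fixes z0 z1 w1 w2 :: complex
  assumes "cdot (w1 - z1) (z0 - z1) + cdot (w2 - z1) (z0 - z1) \<le> (cmod (z0 - z1))^2"
  shows "cmod (z1 - z0) \<le> cmod (w1 - z0) + cmod (w2 - z0)"
proof -
  define u where "u = z0 - z1"
  have low: "(cmod u)^2 - cmod (w - z0) * cmod u \<le> cdot (w - z1) u" for w
  proof -
    have "cdot (w - z1) u = Re ((w - z0) * cnj u) + (cmod u)^2"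
      unfolding Re_mult_cnj_self[symmetric] by (simp add: cdot_def u_def algebra_simps)
    moreover have "- (cmod (w - z0) * cmod u) \<le> Re ((w - z0) * cnj u)"
      using abs_Re_le_cmod[of "(w - z0) * cnj u"] by (simp add: norm_mult)
    ultimately show ?thesis by linarith
  qed
  have "cmod u * cmod u \<le> (cmod (w1 - z0) + cmod (w2 - z0)) * cmod u"
    using low[of w1] low[of w2] assms by (simp add: u_def power2_eq_square algebra_simps)
  then show ?thesis
    by (cases "u = 0") (auto simp: u_def norm_minus_commute)
qed

lemma compr_eigenvalues_nearest_point:
  fixes A P :: "'a::chilbert \<Rightarrow> 'a"
  assumes nA: "normal_op A" and simple: "simple_eigenvalue A z0"
    and C: "spec A - {z0} \<subseteq> C" "convex C" "closed C"
    and z1: "z1 \<in> C" "z1 \<noteq> z0" and near: "\<forall>w\<in>C. cmod (z0 - z1) \<le> cmod (w - z0)"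
    and oP: "orth_proj P"
    and w: "is_compr_eigenvalue P A w1" "is_compr_eigenvalue P A w2" "w1 \<noteq> w2"
  shows "cdot (w1 - z1) (z0 - z1) + cdot (w2 - z1) (z0 - z1) \<le> (cmod (z0 - z1))^2"
proof -
  obtain e where e: "norm e = 1" "eigenspace A z0 = range (\<lambda>c. cscale c e)"
    using simple_eigenvalue_unit_vector[OF simple] by blast
  define u where "u = z0 - z1"
  have hp: "Re (cnj u * w) \<le> Re (cnj u * z1)" if "w \<in> spec A" "w \<noteq> z0" for w
    unfolding u_def using that C by (intro nearest_point_half_plane[OF C(2,3) z1(1) _ near]) auto
  have u2: "Re (cnj u * z0) - Re (cnj u * z1) = (cmod u)^2"
    unfolding Re_mult_cnj_self[symmetric] by (simp add: u_def algebra_simps)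
  moreover have "0 < (cmod u)^2" using z1(2) by (simp add: u_def)
  ultimately have z0: "Re (cnj u * z1) < Re (cnj u * z0)" by linarith
  have cdot: "cdot (w - z1) u = Re (cnj u * w) - Re (cnj u * z1)" for w
    by (simp add: cdot_def algebra_simps)
  show ?thesis
    using compr_eigenvalues_half_plane[OF nA e hp z0 oP w] u2 unfolding cdot u_def[symmetric]
    by linarith
qed

theorem theoremA2p3:
  fixes A P :: "'a::chilbert \<Rightarrow> 'a" and z0 z1 :: complex
  assumes "normal_op A"
    and "simple_eigenvalue A z0"
    and "z0 \<notin> closure (convex hull (spec A - {z0}))"
    and "z1 \<in> closure (convex hull (spec A - {z0}))"
    and "\<forall>w \<in> closure (convex hull (spec A - {z0})). cmod (z0 - z1) \<le> cmod (w - z0)"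
    and "orth_proj P"
  shows "(\<forall>w1 w2. is_compr_eigenvalue P A w1 \<and> is_compr_eigenvalue P A w2 \<and> w1 \<noteq> w2 \<longrightarrow>
            cdot (w1 - z1) (z0 - z1) / (cmod (z1 - z0))\<^sup>2
              + cdot (w2 - z1) (z0 - z1) / (cmod (z1 - z0))\<^sup>2 \<le> 1
          \<and> cmod (w1 - z0) + cmod (w2 - z0) \<ge> cmod (z1 - z0))
       \<and> (\<forall>w w'. is_compr_eigenvalue P A w \<and> is_compr_eigenvalue P A w'
            \<and> cmod (w - z0) < cmod (z1 - z0) / 2 \<and> cmod (w' - z0) < cmod (z1 - z0) / 2
            \<longrightarrow> w = w')"
proof -
  define C where "C = closure (convex hull (spec A - {z0}))"
  have C: "spec A - {z0} \<subseteq> C" "convex C" "closed C"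
    unfolding C_def using hull_subset closure_subset
    by (metis subset_trans) (simp_all add: convex_closure)
  have z1: "z1 \<in> C" "z1 \<noteq> z0" using assms(3,4) by (auto simp: C_def)
  have d: "0 < cmod (z1 - z0)" "cmod (z0 - z1) = cmod (z1 - z0)"
    using z1(2) by (simp_all add: norm_minus_commute)
  note sum = compr_eigenvalues_nearest_point[OF assms(1,2) C z1 assms(5)[folded C_def] assms(6)]
  note dist = dist_sum_ge_if_cdot_sum_le[OF sum]
  show ?thesis
  proof (intro conjI allI impI; (elim conjE)?)
    fix w1 w2 assume w: "is_compr_eigenvalue P A w1" "is_compr_eigenvalue P A w2" "w1 \<noteq> w2"
    show "cdot (w1 - z1) (z0 - z1) / (cmod (z1 - z0))\<^sup>2
        + cdot (w2 - z1) (z0 - z1) / (cmod (z1 - z0))\<^sup>2 \<le> 1"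
      using sum[OF w] d by (simp add: add_divide_distrib[symmetric] pos_divide_le_eq)
    show "cmod (z1 - z0) \<le> cmod (w1 - z0) + cmod (w2 - z0)" by (rule dist[OF w])
  next
    fix w w' assume "is_compr_eigenvalue P A w" "is_compr_eigenvalue P A w'"
      and "cmod (w - z0) < cmod (z1 - z0) / 2" "cmod (w' - z0) < cmod (z1 - z0) / 2"
    then show "w = w'" using dist by force
  qed
qed

end
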